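(* Let $(X,d,\mu)$, $p$, $\underline{Q}_\mu$ be as in the context. Fix $\underline{\theta}\in[0,\min\{p,\underline{Q}_\mu\})$, an integer $N\ge2$, numbers $0<\theta_1<\dots<\theta_N=\underline{\theta}$ and closed sets $S^i\in\mathcal{ADR}_{\theta_i}(X)$, $i=1,\dots,N$. Then there is a constant $C>0$ such that $$\mathcal{GL}^{(3)}_p(f)\le C\Big(\mathcal{GL}^{(1)}_p(f)+\sum_{i=1}^N\|f|L_p(\mathcal H_{\theta_i}\lfloor_{S^i})\|\Big)\quad\text{for all }f\in\bigcap_{i=1}^NL_p(\mathcal H_{\theta_i}\lfloor_{S^i}).$$
   Context: Standing setting: $(X,d)$ complete separable metric space, $\mu$ a Borel regular locally finite outer measure, $\operatorname{supp}\mu=X$, uniformly locally doubling (for every $R>0$, $\sup_{r\in(0,R]}\sup_x\mu(B_{2r}(x))/\mu(B_r(x))<\infty$). Balls are closed, $B_r(x)=\{y:d(x,y)\le r\}$, $B_k(x)=B_{2^{-k}}(x)$. A fixed $p\in(1,\infty)$; $X$ supports a weak local $(1,p)$-Poincaré inequality (for every $R>0$ there are $C,\lambda\ge1$ with $\inf_c\frac{1}{\mu(B_r(x))}\int_{B_r(x)}|f-c|d\mu\le Cr(\frac{1}{\mu(B_{\lambda r}(x))}\int_{B_{\lambda r}(x)}(\operatorname{lip}f)^pd\mu)^{1/p}$ for Lipschitz $f$, $x\in X$, $r\in(0,R]$). $\underline{Q}_\mu$ is the infimum of $Q>0$ such that for every $R>0$ there is $C$ with $(r_{B'}/r_B)^Q\le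 C\mu(B')/\mu(B)$ for balls $B'\subset B$, $0<r_{B'}\le r_B\le R$. Notation: $\mathrm{Av}_{G,\mathfrak m}(g)=\mathfrak m(G)^{-1}\int_Gg\,d\mathfrak m$ if $\mathfrak m(G)>0$, else $0$; $\mathfrak m\lfloor_S(E)=\mathfrak m(E\cap S)$. $\mathcal H_{\vartheta,\delta}(E):=\inf\{\sum\mu(B_{r_i}(x_i))r_i^{-\vartheta}:E\subset\bigcup B_{r_i}(x_i),0<r_i<\delta\}$, $\mathcal H_\vartheta=\lim_{\delta\to0}\mathcal H_{\vartheta,\delta}$. $\mathcal{ADR}_\vartheta(X)$: closed $S'$ with $\varkappa_1\mu(B_r(x))r^{-\vartheta}\le\mathcal H_\vartheta(B_r(x)\cap S')\le\varkappa_2\mu(B_r(x))r^{-\vartheta}$ for $x\in S'$, $r\in(0,1]$. Gluing functionals: $\Sigma^{i,j}_k:=\{(y,z)\in S^i\times S^j:d(y,z)\le2^{-k}\}$, $\operatorname{w}_k(y,z):=(\mu(B_k(y))\mu(B_k(z)))^{-1/2}$, $A^{i,j}_k(f)(y,z):=\mathrm{Av}_{B_k(y)\cap S^i,\mathcal H_{\theta_i}}\mathrm{Av}_{B_k(z)\cap S^j,\mathcal H_{\theta_j}}|f(y')-f(z')|$. $\mathcal{GL}^{(1)}_p(f):=\big(\sum_{i\ne j}\sum_{k\ge1}2^{k(p-\theta_i-\theta_j)}\iint_{\Sigma^{i,j}_k}\operatorname{w}_k(y,z)|f(y)-f(z)|^pd\mathcal H_{\theta_i}(y)d\mathcal H_{\theta_j}(z)\big)^{1/p}$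 and $\mathcal{GL}^{(3)}_p(f)$ is the same with $|f(y)-f(z)|$ replaced by $A^{i,j}_k(f)(y,z)$. *)

theory Defs
  imports "HOL-Analysis.Analysis"
begin

definition epowr :: "ennreal \<Rightarrow> real \<Rightarrow> ennreal" where
  "epowr x a = (if x = \<infinity> then \<infinity> else ennreal (enn2real x powr a))"

definition Av :: "'a measure \<Rightarrow> 'a set \<Rightarrow> ('a \<Rightarrow> ennreal) \<Rightarrow> ennreal" where
  "Av m G g = (if emeasure m G > 0 then (\<integral>\<^sup>+x\<in>G. g x \<partial>m) / emeasure m G else 0)"

definition lip :: "('a::metric_space \<Rightarrow> real) \<Rightarrow> 'a \<Rightarrow> real" where
  "lip f x = real_of_ereal
     (Liminf (at_right (0::real)) (\<lambda>r. SUP y\<in>cball x r. ereal (\<bar>f y - f x\<bar> / r)))"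

definition locally_finite_msr :: "'a::metric_space measure \<Rightarrow> bool" where
  "locally_finite_msr M \<longleftrightarrow> (\<forall>x. \<exists>e>0. emeasure M (ball x e) < \<infinity>)"

definition full_support :: "'a::metric_space measure \<Rightarrow> bool" where
  "full_support M \<longleftrightarrow> (\<forall>x r. r > 0 \<longrightarrow> emeasure M (ball x r) > 0)"

definition unif_loc_doubling :: "'a::metric_space measure \<Rightarrow> bool" where
  "unif_loc_doubling M \<longleftrightarrow>
     (\<forall>R>0. \<exists>C::real. \<forall>r x. 0 < r \<and> r \<le> R \<longrightarrow>
        emeasure M (cball x (2*r)) \<le> ennreal C * emeasure M (cball x r))"

definition weak_local_poincare :: "real \<Rightarrow> 'a::metric_space measure \<Rightarrow> bool" where
  "weak_local_poincare p M \<longleftrightarrow>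
     (\<forall>R>0. \<exists>C lam::real. C \<ge> 1 \<and> lam \<ge> 1 \<and>
        (\<forall>f::'a \<Rightarrow> real. \<forall>L x r. lipschitz_on L UNIV f \<and> 0 < r \<and> r \<le> R \<longrightarrow>
           (INF c::real. Av M (cball x r) (\<lambda>y. ennreal \<bar>f y - c\<bar>))
             \<le> ennreal (C * r) *
               epowr (Av M (cball x (lam * r)) (\<lambda>y. ennreal (lip f y powr p))) (1 / p)))"

definition Qlow :: "'a::metric_space measure \<Rightarrow> real" where
  "Qlow M = Inf {Q. Q > 0 \<and>
     (\<forall>R>0. \<exists>C::real. \<forall>x x' r r'. cball x' r' \<subseteq> cball x r \<and> 0 < r' \<and> r' \<le> r \<and> r \<le> R \<longrightarrow>
        (r' / r) powr Q \<le> C * measure M (cball x' r') / measure M (cball x r))}"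

definition Hd :: "'a::metric_space measure \<Rightarrow> real \<Rightarrow> real \<Rightarrow> 'a set \<Rightarrow> ennreal" where
  "Hd M th \<delta> E = (INF cv \<in> {(c, r, I). (\<forall>i\<in>I. 0 < r i \<and> r i < \<delta>) \<and>
                                   E \<subseteq> (\<Union>i\<in>I. cball (c i) (r i))}.
      (case cv of (c, r, I) \<Rightarrow>
        (\<Sum>i::nat. if i \<in> I then emeasure M (cball (c i) (r i)) * ennreal (r i powr (- th)) else 0)))"

definition Hth :: "'a::metric_space measure \<Rightarrow> real \<Rightarrow> 'a set \<Rightarrow> ennreal" where
  "Hth M th E = (SUP \<delta>\<in>{0<..}. Hd M th \<delta> E)"

definition Hmeas :: "'a::metric_space measure \<Rightarrow> real \<Rightarrow> 'a measure" where
  "Hmeas M th = measure_of UNIV (sets borel) (Hth M th)"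

definition Hrestr :: "'a::metric_space measure \<Rightarrow> real \<Rightarrow> 'a set \<Rightarrow> 'a measure" where
  "Hrestr M th S = density (Hmeas M th) (indicator S)"

definition ADR :: "'a::metric_space measure \<Rightarrow> real \<Rightarrow> 'a set \<Rightarrow> bool" where
  "ADR M th S \<longleftrightarrow> closed S \<and>
     (\<exists>k1 k2::real. 0 < k1 \<and> 0 < k2 \<and>
       (\<forall>x\<in>S. \<forall>r. 0 < r \<and> r \<le> 1 \<longrightarrow>
          ennreal k1 * emeasure M (cball x r) * ennreal (r powr (- th)) \<le> Hth M th (cball x r \<inter> S) \<and>
          Hth M th (cball x r \<inter> S) \<le> ennreal k2 * emeasure M (cball x r) * ennreal (r powr (- th))))"

definition inLp :: "real \<Rightarrow> 'a measure \<Rightarrow> ('a \<Rightarrow> real) \<Rightarrow> bool" where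
  "inLp p m f \<longleftrightarrow> f \<in> borel_measurable m \<and> (\<integral>\<^sup>+x. ennreal (\<bar>f x\<bar> powr p) \<partial>m) < \<infinity>"

definition Lpnorm :: "real \<Rightarrow> 'a measure \<Rightarrow> ('a \<Rightarrow> real) \<Rightarrow> ennreal" where
  "Lpnorm p m f = epowr (\<integral>\<^sup>+x. ennreal (\<bar>f x\<bar> powr p) \<partial>m) (1 / p)"

definition wk :: "'a::metric_space measure \<Rightarrow> nat \<Rightarrow> 'a \<Rightarrow> 'a \<Rightarrow> ennreal" where
  "wk M k y z = ennreal ((measure M (cball y (2 powr - real k)) * measure M (cball z (2 powr - real k)))
                         powr (- 1 / 2))"

definition Aijk :: "'a::metric_space measure \<Rightarrow> (nat \<Rightarrow> real) \<Rightarrow> (nat \<Rightarrow> 'a set) \<Rightarrow> nat \<Rightarrow> nat \<Rightarrow> nat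
                   \<Rightarrow> ('a \<Rightarrow> real) \<Rightarrow> 'a \<Rightarrow> 'a \<Rightarrow> ennreal" where
  "Aijk M \<theta> S i j k f y z =
     Av (Hmeas M (\<theta> i)) (cball y (2 powr - real k) \<inter> S i)
       (\<lambda>y'. Av (Hmeas M (\<theta> j)) (cball z (2 powr - real k) \<inter> S j) (\<lambda>z'. ennreal \<bar>f y' - f z'\<bar>))"

definition GLsum :: "real \<Rightarrow> 'a::metric_space measure \<Rightarrow> nat \<Rightarrow> (nat \<Rightarrow> real) \<Rightarrow> (nat \<Rightarrow> 'a set)
                    \<Rightarrow> (nat \<Rightarrow> nat \<Rightarrow> nat \<Rightarrow> 'a \<Rightarrow> 'a \<Rightarrow> ennreal) \<Rightarrow> ennreal" where
  "GLsum p M N \<theta> S g =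
     epowr (\<Sum>i\<in>{1..N}. \<Sum>j\<in>{1..N}. if i = j then 0 else
        (\<Sum>k'. let k = Suc k' in
           ennreal (2 powr (real k * (p - \<theta> i - \<theta> j))) *
           (\<integral>\<^sup>+y. (\<integral>\<^sup>+z. (if dist y z \<le> 2 powr - real k then wk M k y z * g i j k y z else 0)
                 \<partial>Hrestr M (\<theta> j) (S j)) \<partial>Hrestr M (\<theta> i) (S i)))) (1 / p)"

definition GL1 :: "real \<Rightarrow> 'a::metric_space measure \<Rightarrow> nat \<Rightarrow> (nat \<Rightarrow> real) \<Rightarrow> (nat \<Rightarrow> 'a set)
                   \<Rightarrow> ('a \<Rightarrow> real) \<Rightarrow> ennreal" where
  "GL1 p M N \<theta> S f = GLsum p M N \<theta> S (\<lambda>i j k y z. ennreal (\<bar>f y - f z\<bar> powr p))"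

definition GL3 :: "real \<Rightarrow> 'a::metric_space measure \<Rightarrow> nat \<Rightarrow> (nat \<Rightarrow> real) \<Rightarrow> (nat \<Rightarrow> 'a set)
                   \<Rightarrow> ('a \<Rightarrow> real) \<Rightarrow> ennreal" where
  "GL3 p M N \<theta> S f = GLsum p M N \<theta> S (\<lambda>i j k y z. epowr (Aijk M \<theta> S i j k f y z) p)"

end

theory Submission
  imports Defs
begin

(* Jensen's inequality bounds (A_k f)^p by the mean of |f(y') - f(z')|^p over (y', z') in
   B_k(y) x B_k(z). For k >= 3, doubling of mu and Ahlfors-David regularity of the S^i show that
   w_k(y,z), divided by the masses of B_k(y) cap S^i and B_k(z) cap S^j, is at most a constant
   times w_(k-2)(y',z') divided by the masses of the balls of radius 2^-k around y' and z'.
   Integrating in (y,z) first, these masses cancel, so the k-th term of GL3 is bounded by a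
   constant times the (k-2)-th term of GL1. The scales k = 1, 2 are controlled by the L_p norms,
   via |a - b|^p <= 2^p (|a|^p + |b|^p) and the L_1 boundedness of ball averages. Summing over
   the pairs (i,j) and using subadditivity of x |-> x^(1/p) gives the claim. *)

lemma epowr_ennreal: "0 \<le> x \<Longrightarrow> epowr (ennreal x) a = ennreal (x powr a)"
  unfolding epowr_def by simp

lemma epowr_top [simp]: "epowr top a = top"
  unfolding epowr_def by simp

lemma epowr_mono: "x \<le> y \<Longrightarrow> 0 \<le> a \<Longrightarrow> epowr x a \<le> epowr y a"
  unfolding epowr_def
  by (cases x; cases y) (auto intro!: ennreal_leI powr_mono2 simp: top_unique)

lemma measurable_epowr [measurable (raw)]:
  assumes [measurable]: "g \<in> borel_measurable m"
  shows "(\<lambda>x. epowr (g x) a) \<in> borel_measurable m"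
  unfolding epowr_def by measurable

lemma epowr_mult_ennreal:
  assumes "0 \<le> c" "0 < q"
  shows "epowr (ennreal c * x) q = ennreal (c powr q) * epowr x q"
proof (cases x)
  case (real t)
  then show ?thesis using assms by (simp add: epowr_ennreal ennreal_mult[symmetric] powr_mult)
next
  case top
  then show ?thesis using assms by (cases "c = 0") (auto simp: epowr_def ennreal_mult_top)
qed

lemma powr_add_le:
  fixes x y q :: real
  assumes "0 \<le> x" "0 \<le> y" "0 < q" "q \<le> 1"
  shows "(x + y) powr q \<le> x powr q + y powr q"
proof (cases "x + y = 0")
  case True
  then show ?thesis using assms by simp
next
  case False
  define s where "s = x + y"
  have s: "0 < s" using False assms unfolding s_def by simp
  have frac_le: "t / s \<le> (t / s) powr q" if "0 \<le> t" "t \<le> s" for t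
  proof -
    have "(t / s) powr 1 \<le> (t / s) powr q" using that s assms by (intro powr_mono') auto
    then show ?thesis using that s by simp
  qed
  have "1 = x / s + y / s" using s unfolding s_def by (simp add: add_divide_distrib[symmetric])
  also have "\<dots> \<le> (x / s) powr q + (y / s) powr q"
    using frac_le assms unfolding s_def by (intro add_mono) auto
  also have "\<dots> = (x powr q + y powr q) / s powr q"
    using assms s by (simp add: powr_divide add_divide_distrib)
  finally show ?thesis using s unfolding s_def[symmetric] by (simp add: field_simps)
qed

lemma epowr_add_le:
  assumes "0 < q" "q \<le> 1"
  shows "epowr (a + b) q \<le> epowr a q + epowr b q"
  using assms powr_add_le
  by (cases a; cases b) (auto simp: epowr_ennreal ennreal_plus[symmetric] ennreal_leI simp del: ennreal_plus)

lemma epowr_sum_le: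
  assumes "finite I" "0 < q" "q \<le> 1"
  shows "epowr (\<Sum>i\<in>I. a i) q \<le> (\<Sum>i\<in>I. epowr (a i) q)"
  using assms(1)
proof (induction I rule: finite_induct)
  case empty
  then show ?case using assms by (simp add: epowr_ennreal[of 0, simplified])
next
  case (insert x F)
  then have "epowr (\<Sum>i\<in>insert x F. a i) q \<le> epowr (a x) q + epowr (\<Sum>i\<in>F. a i) q"
    using epowr_add_le[OF assms(2,3)] by simp
  also have "\<dots> \<le> epowr (a x) q + (\<Sum>i\<in>F. epowr (a i) q)"
    using insert by (intro add_left_mono)
  finally show ?case using insert by simp
qed

lemma powr_tangent_le:
  fixes p t l :: real
  assumes "1 < p" "0 \<le> t" "0 < l"
  shows "t \<le> l powr (1 - p) / p * t powr p + (1 - 1 / p) * l"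
proof (cases "t = 0")
  case True
  then show ?thesis using assms by simp
next
  case False
  have "(l powr (1 - p) * t powr p) powr (1 / p) * l powr (1 - 1 / p)
      \<le> 1 / p * (l powr (1 - p) * t powr p) + (1 - 1 / p) * l"
    using assms False by (intro Youngs_inequality_0) auto
  moreover have "(l powr (1 - p) * t powr p) powr (1 / p) * l powr (1 - 1 / p) = t"
    using assms False
    by (simp add: powr_mult powr_powr powr_add[symmetric] field_simps)
  ultimately show ?thesis by simp
qed

lemma abs_diff_powr_le:
  fixes a b p :: real
  assumes "0 < p"
  shows "\<bar>a - b\<bar> powr p \<le> 2 powr p * \<bar>a\<bar> powr p + 2 powr p * \<bar>b\<bar> powr p"
proof -
  have "\<bar>a - b\<bar> powr p \<le> (2 * max \<bar>a\<bar> \<bar>b\<bar>) powr p" using assms by (intro powr_mono2) auto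
  also have "\<dots> = 2 powr p * max \<bar>a\<bar> \<bar>b\<bar> powr p" by (subst powr_mult) auto
  also have "max \<bar>a\<bar> \<bar>b\<bar> powr p \<le> \<bar>a\<bar> powr p + \<bar>b\<bar> powr p" by (auto simp: max_def)
  finally show ?thesis by (simp add: distrib_left)
qed

lemma powr_neg_half_le:
  fixes P Q c :: real
  assumes "0 < Q" "Q \<le> c\<^sup>2 * P" "0 < c"
  shows "P powr (-1/2) \<le> c * Q powr (-1/2)"
proof -
  have "P powr (-1/2) \<le> (Q / c\<^sup>2) powr (-1/2)"
    using assms by (intro powr_mono2') (auto simp: field_simps)
  also have "\<dots> = c * Q powr (-1/2)"
    using assms by (simp add: powr_divide powr_minus_divide powr_powr[symmetric] powr_half_sqrt[symmetric])
  finally show ?thesis .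
qed

lemma powr_neg_half_le_inverse:
  fixes a x y :: real
  assumes "0 < a" "a \<le> x" "a \<le> y"
  shows "(x * y) powr (-1/2) \<le> 1 / a"
proof -
  have "(x * y) powr (-1/2) \<le> 1 * (a * a) powr (-1/2)"
    using assms by (intro powr_neg_half_le) (auto intro: mult_mono)
  also have "(a * a) powr (-1/2) = 1 / a"
    using assms(1) by (simp add: powr_minus_divide powr_half_sqrt)
  finally show ?thesis by simp
qed

lemma ennreal_mult_inverse_le: "x * inverse x \<le> (1::ennreal)"
proof (cases x rule: ennreal_cases)
  case (real r)
  then show ?thesis by (cases "r = 0") (auto simp: inverse_ennreal ennreal_mult[symmetric])
qed simp

lemma dyadic_le: "n \<le> k \<Longrightarrow> (2::real) powr - real k \<le> 1 / 2 ^ n"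
  by (simp add: powr_minus_divide powr_realpow[symmetric] divide_left_mono powr_mono)

lemma four_times_dyadic: "4 * 2 powr - real (Suc (Suc k)) = (2::real) powr - real k"
proof -
  have "(2::real) powr 2 * 2 powr - real (Suc (Suc k)) = 2 powr (2 + - real (Suc (Suc k)))"
    by (rule powr_add[symmetric])
  then show ?thesis by simp
qed

lemma geometric_series_shift_le:
  fixes a b :: "nat \<Rightarrow> ennreal" and e :: "nat \<Rightarrow> real"
  assumes e: "\<And>k. 0 \<le> e k" "\<And>k. e (Suc (Suc k)) = e 2 * e k"
    and large: "\<And>k. a (Suc (Suc (Suc k))) \<le> ennreal CL * b (Suc k)"
    and small: "a (Suc 0) \<le> ennreal C1 * L" "a (Suc (Suc 0)) \<le> ennreal C2 * L"
    and C: "0 \<le> CL" "0 \<le> C1" "0 \<le> C2"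
  shows "(\<Sum>k. ennreal (e (Suc k)) * a (Suc k))
    \<le> ennreal (e 2 * CL + (e (Suc 0) * C1 + e 2 * C2)) * ((\<Sum>k. ennreal (e (Suc k)) * b (Suc k)) + L)"
proof -
  define T3 where "T3 k = ennreal (e (Suc k)) * a (Suc k)" for k
  define T1 where "T1 k = ennreal (e (Suc k)) * b (Suc k)" for k
  define D where "D = e 2 * CL + (e (Suc 0) * C1 + e 2 * C2)"
  have shift: "T3 (j + 2) \<le> ennreal (e 2 * CL) * T1 j" for j
  proof -
    have "T3 (j + 2) \<le> ennreal (e 2 * e (Suc j)) * (ennreal CL * b (Suc j))"
      unfolding T3_def using e(2)[of "Suc j"] large[of j] by (simp add: mult_left_mono)
    also have "\<dots> = ennreal (e 2 * CL) * T1 j"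
      unfolding T1_def using e(1) C by (simp add: ennreal_mult mult_ac)
    finally show ?thesis .
  qed
  have "(\<Sum>k. T3 k) = (\<Sum>j. T3 (j + 2)) + (\<Sum>j<2. T3 j)"
    by (rule suminf_offset) (rule summableI)
  also have "\<dots> \<le> ennreal (e 2 * CL) * (\<Sum>j. T1 j) + (ennreal (e (Suc 0) * C1) * L + ennreal (e 2 * C2) * L)"
    using shift small e(1) C unfolding T3_def
    by (intro add_mono) (auto simp: suminf_le eval_nat_numeral ennreal_mult mult.assoc intro!: add_mono mult_left_mono
        simp flip: ennreal_suminf_cmult)
  also have "\<dots> = ennreal (e 2 * CL) * (\<Sum>j. T1 j) + ennreal (e (Suc 0) * C1 + e 2 * C2) * L"
    using e(1) C by (simp add: ennreal_plus distrib_right)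
  also have "\<dots> \<le> ennreal D * (\<Sum>j. T1 j) + ennreal D * L"
  proof -
    have "e 2 * CL \<le> D" "e (Suc 0) * C1 + e 2 * C2 \<le> D"
      unfolding D_def using e(1) C by auto
    then show ?thesis by (intro add_mono mult_right_mono ennreal_leI) auto
  qed
  finally show ?thesis unfolding T3_def T1_def D_def by (simp add: distrib_left)
qed

lemma sum_sum_add_eq:
  fixes L :: "'i \<Rightarrow> ennreal"
  shows "(\<Sum>i\<in>I. \<Sum>j\<in>I. L i + L j) = ennreal (2 * real (card I)) * sum L I"
proof -
  have "(\<Sum>i\<in>I. \<Sum>j\<in>I. L i + L j) = (\<Sum>i\<in>I. of_nat (card I) * L i) + (\<Sum>i\<in>I. sum L I)"
    by (simp only: sum.distrib sum_constant)
  also have "\<dots> = of_nat (card I) * sum L I + of_nat (card I) * sum L I"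
    by (simp only: sum_distrib_left[symmetric] sum_constant)
  also have "\<dots> = ennreal (2 * real (card I)) * sum L I"
    by (simp only: mult_2 ennreal_plus[OF of_nat_0_le_iff of_nat_0_le_iff] ennreal_of_nat_eq_real_of_nat
        distrib_right)
  finally show ?thesis .
qed

lemma epowr_offdiag_sum_le:
  fixes a b :: "'i \<Rightarrow> 'i \<Rightarrow> ennreal" and L :: "'i \<Rightarrow> ennreal"
  assumes I: "finite I" and p: "1 \<le> p" and C: "0 \<le> C"
    and ab: "\<And>i j. i \<in> I \<Longrightarrow> j \<in> I \<Longrightarrow> i \<noteq> j \<Longrightarrow> a i j \<le> ennreal C * (b i j + (L i + L j))"
  shows "epowr (\<Sum>i\<in>I. \<Sum>j\<in>I. if i = j then 0 else a i j) (1 / p)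
    \<le> ennreal ((C * (2 * real (card I) + 1)) powr (1 / p)) *
       (epowr (\<Sum>i\<in>I. \<Sum>j\<in>I. if i = j then 0 else b i j) (1 / p) + (\<Sum>i\<in>I. epowr (L i) (1 / p)))"
proof -
  define B where "B = (\<Sum>i\<in>I. \<Sum>j\<in>I. if i = j then 0 else b i j)"
  define D where "D = C * (2 * real (card I) + 1)"
  have q: "0 < 1 / p" "1 / p \<le> 1" using p by auto
  have "(\<Sum>i\<in>I. \<Sum>j\<in>I. if i = j then 0 else a i j)
      \<le> (\<Sum>i\<in>I. \<Sum>j\<in>I. ennreal C * ((if i = j then 0 else b i j) + (L i + L j)))"
    using ab by (intro sum_mono) auto
  also have "\<dots> = ennreal C * (B + ennreal (2 * real (card I)) * sum L I)"
    unfolding B_def sum_sum_add_eq[symmetric] by (simp only: sum_distrib_left distrib_left sum.distrib)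
  also have "\<dots> \<le> ennreal D * (B + sum L I)"
  proof -
    have "C \<le> D" unfolding D_def using C by (simp add: algebra_simps)
    then have CB: "ennreal C * B \<le> ennreal D * B"
      by (intro mult_right_mono ennreal_leI) auto
    have "C * (2 * real (card I)) \<le> D" unfolding D_def using C by (simp add: algebra_simps)
    then have LD: "ennreal (C * (2 * real (card I))) * sum L I \<le> ennreal D * sum L I"
      by (intro mult_right_mono ennreal_leI) auto
    have eq: "ennreal C * (ennreal (2 * real (card I)) * sum L I) = ennreal (C * (2 * real (card I))) * sum L I"
      using C by (simp add: ennreal_mult mult.assoc)
    show ?thesis unfolding distrib_left eq using CB LD by (rule add_mono)
  qed
  finally have "epowr (\<Sum>i\<in>I. \<Sum>j\<in>I. if i = j then 0 else a i j) (1 / p) \<le> epowr (ennreal D * (B + sum L I)) (1 / p)"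
    using q by (intro epowr_mono) auto
  also have "\<dots> = ennreal (D powr (1 / p)) * epowr (B + sum L I) (1 / p)"
    unfolding D_def using C q by (intro epowr_mult_ennreal) auto
  also have "\<dots> \<le> ennreal (D powr (1 / p)) * (epowr B (1 / p) + (\<Sum>i\<in>I. epowr (L i) (1 / p)))"
    using q I by (intro mult_left_mono order_trans[OF epowr_add_le] add_left_mono epowr_sum_le) auto
  finally show ?thesis unfolding B_def D_def .
qed

lemma uniform_bound_on_pairs:
  fixes X Y :: "'i \<Rightarrow> 'i \<Rightarrow> 'f \<Rightarrow> ennreal"
  assumes "finite I" and bound: "\<forall>i\<in>I. \<forall>j\<in>I. \<exists>c\<ge>0. \<forall>f\<in>F. X i j f \<le> ennreal c * Y i j f"
  shows "\<exists>C>0. \<forall>f\<in>F. \<forall>i\<in>I. \<forall>j\<in>I. X i j f \<le> ennreal C * Y i j f"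
proof -
  have "\<forall>i\<in>I. \<exists>c. \<forall>j\<in>I. 0 \<le> c j \<and> (\<forall>f\<in>F. X i j f \<le> ennreal (c j) * Y i j f)"
    using bound by (auto intro!: bchoice)
  then obtain c where c: "\<forall>i\<in>I. \<forall>j\<in>I. 0 \<le> c i j \<and> (\<forall>f\<in>F. X i j f \<le> ennreal (c i j) * Y i j f)"
    by (auto dest!: bchoice)
  define C where "C = 1 + (\<Sum>i\<in>I. \<Sum>j\<in>I. c i j)"
  have "X i j f \<le> ennreal C * Y i j f" if "f \<in> F" "i \<in> I" "j \<in> I" for f i j
  proof -
    have "c i j \<le> (\<Sum>j\<in>I. c i j)" using that c assms(1) by (intro member_le_sum) auto
    also have "\<dots> \<le> (\<Sum>i\<in>I. \<Sum>j\<in>I. c i j)"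
      using that c assms(1) by (intro member_le_sum[of i] sum_nonneg) auto
    finally have "c i j \<le> C" unfolding C_def by simp
    then have "ennreal (c i j) * Y i j f \<le> ennreal C * Y i j f"
      by (intro mult_right_mono ennreal_leI) auto
    then show ?thesis using c that by (meson order_trans)
  qed
  moreover have "0 < C" unfolding C_def using c by (simp add: sum_nonneg add_pos_nonneg)
  ultimately show ?thesis by blast
qed

section \<open>Averages\<close>

lemma Av_mono: "(\<And>x. g x \<le> h x) \<Longrightarrow> Av m G g \<le> Av m G h"
  unfolding Av_def by (auto intro!: divide_right_mono_ennreal nn_integral_mono mult_right_mono)

lemma Av_affine:
  assumes "0 < emeasure m G" "emeasure m G < \<infinity>" "G \<in> sets m" "g \<in> borel_measurable m"
  shows "Av m G (\<lambda>x. a * g x + b) = a * Av m G g + b"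
proof -
  obtain v where v: "emeasure m G = ennreal v" "0 < v"
    using assms(1,2) by (cases "emeasure m G") auto
  have "(\<integral>\<^sup>+x\<in>G. a * g x + b \<partial>m) = a * (\<integral>\<^sup>+x\<in>G. g x \<partial>m) + b * ennreal v"
    using assms(3,4) v(1)
    by (simp add: distrib_right nn_integral_add nn_integral_cmult nn_integral_cmult_indicator mult.assoc)
  then show ?thesis
    using v by (simp add: Av_def ennreal_divide_times divide_ennreal ennreal_times_divide
        add_divide_distrib_ennreal ennreal_mult_divide_eq)
qed

lemma Av_eq_nn_integral:
  assumes "0 < emeasure m G" "G \<in> sets m" "g \<in> borel_measurable m"
  shows "Av m G g = (\<integral>\<^sup>+x. indicator G x * inverse (emeasure m G) * g x \<partial>m)"
proof -
  have "(\<integral>\<^sup>+x. indicator G x * inverse (emeasure m G) * g x \<partial>m)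
      = inverse (emeasure m G) * (\<integral>\<^sup>+x\<in>G. g x \<partial>m)"
    using assms(2,3) by (subst nn_integral_cmult[symmetric]) (auto intro!: nn_integral_cong simp: mult_ac)
  then show ?thesis using assms(1) by (simp add: Av_def divide_ennreal_def mult.commute)
qed

lemma Av_le_tangent:
  assumes p: "1 < p" and l: "0 < l"
    and G: "G \<in> sets m" "emeasure m G < \<infinity>" and g: "g \<in> borel_measurable m"
  shows "Av m G g \<le> ennreal (l powr (1 - p) / p) * Av m G (\<lambda>x. epowr (g x) p) + ennreal ((1 - 1 / p) * l)"
proof (cases "emeasure m G = 0")
  case True
  then show ?thesis by (simp add: Av_def)
next
  case False
  have "g x \<le> ennreal (l powr (1 - p) / p) * epowr (g x) p + ennreal ((1 - 1 / p) * l)" for x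
  proof (cases "g x" rule: ennreal_cases)
    case (real t)
    then show ?thesis
      using powr_tangent_le[OF p \<open>0 \<le> t\<close> l] p l
      by (simp add: epowr_ennreal ennreal_mult[symmetric] ennreal_plus[symmetric] del: ennreal_plus)
  qed (use p l in \<open>simp add: ennreal_mult_top\<close>)
  then have "Av m G g \<le> Av m G (\<lambda>x. ennreal (l powr (1 - p) / p) * epowr (g x) p + ennreal ((1 - 1 / p) * l))"
    by (rule Av_mono)
  also have "\<dots> = ennreal (l powr (1 - p) / p) * Av m G (\<lambda>x. epowr (g x) p) + ennreal ((1 - 1 / p) * l)"
    using False G g by (intro Av_affine) (auto simp: zero_less_iff_neq_zero)
  finally show ?thesis .
qed

lemma epowr_Av_le:
  assumes p: "1 < p" and G: "G \<in> sets m" "emeasure m G < \<infinity>" and g: "g \<in> borel_measurable m"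
  shows "epowr (Av m G g) p \<le> Av m G (\<lambda>x. epowr (g x) p)"
proof (cases "Av m G (\<lambda>x. epowr (g x) p)" rule: ennreal_cases)
  case (real y)
  show ?thesis
  proof (cases "y = 0")
    case True
    have "Av m G g \<le> 0 + ennreal l" if "0 < l" for l
    proof -
      have "Av m G g \<le> ennreal ((1 - 1 / p) * l)"
        using Av_le_tangent[OF p that G g] real True by simp
      also have "\<dots> \<le> ennreal l" using p that by (intro ennreal_leI) (simp add: field_simps)
      finally show ?thesis by simp
    qed
    then have "Av m G g = 0" by (metis ennreal_le_epsilon le_zero_eq)
    then show ?thesis using p by (simp add: epowr_ennreal[of 0, simplified])
  next
    case False
    define l where "l = y powr (1 / p)"
    have l: "0 < l" "l powr p = y" using False real p unfolding l_def by (auto simp: powr_powr)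
    have "l powr (1 - p) / p * y + (1 - 1 / p) * l = l"
      using l p by (simp add: l(2)[symmetric] powr_add[symmetric] field_simps)
    then have "Av m G g \<le> ennreal l"
      using Av_le_tangent[OF p l(1) G g] real l p
      by (simp add: ennreal_mult[symmetric] ennreal_plus[symmetric] del: ennreal_plus)
    then have "epowr (Av m G g) p \<le> epowr (ennreal l) p" using p by (intro epowr_mono) auto
    then show ?thesis using l real by (simp add: epowr_ennreal)
  qed
qed simp

section \<open>Integrals over balls\<close>

lemma cball_subset_cball_shift:
  fixes x y :: "'a::metric_space"
  assumes "dist x y + r \<le> s"
  shows "cball y r \<subseteq> cball x s"
proof
  fix w assume "w \<in> cball y r"
  then show "w \<in> cball x s" using assms dist_triangle[of x w y] by simp
qed

lemma pred_in_cball [measurable]: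
  fixes f g :: "'b \<Rightarrow> 'a::{metric_space,second_countable_topology}"
  assumes [measurable]: "f \<in> borel_measurable N" "g \<in> borel_measurable N"
  shows "Measurable.pred N (\<lambda>x. g x \<in> cball (f x) r)"
  unfolding mem_cball by measurable

lemma measurable_emeasure_cball:
  fixes nu :: "'a::{metric_space,second_countable_topology} measure"
  assumes "sigma_finite_measure nu" "sets nu = sets borel"
  shows "(\<lambda>x. emeasure nu (cball x r)) \<in> borel_measurable borel"
proof -
  interpret sigma_finite_measure nu by (rule assms(1))
  have "{p::'a \<times> 'a. dist (fst p) (snd p) \<le> r} \<in> sets (borel \<Otimes>\<^sub>M nu)"
    unfolding sets_pair_measure_cong[OF refl assms(2)] borel_prod
    by (intro borel_closed closed_Collect_le continuous_intros)
  from measurable_emeasure_Pair[OF this] show ?thesis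
    by (simp add: vimage_def cball_def)
qed

lemma measurable_Av [measurable (raw)]:
  assumes "sigma_finite_measure m" "G \<in> sets m"
    and [measurable]: "(\<lambda>(x, y). g x y) \<in> borel_measurable (N \<Otimes>\<^sub>M m)"
  shows "(\<lambda>x. Av m G (g x)) \<in> borel_measurable N"
proof -
  interpret sigma_finite_measure m by (rule assms(1))
  show ?thesis unfolding Av_def using assms(2) by measurable
qed

lemma nn_integral_cball_swap:
  fixes nu :: "'a::{metric_space,second_countable_topology} measure"
  assumes "sigma_finite_measure nu" and [measurable_cong]: "sets nu = sets borel"
    and [measurable]: "g \<in> borel_measurable borel"
  shows "(\<integral>\<^sup>+x. \<integral>\<^sup>+y. indicator (cball x r) y * g y \<partial>nu \<partial>nu)
       = (\<integral>\<^sup>+y. emeasure nu (cball y r) * g y \<partial>nu)"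
proof -
  interpret pair_sigma_finite nu nu using assms(1) by (simp add: pair_sigma_finite_def)
  have "(\<integral>\<^sup>+x. \<integral>\<^sup>+y. indicator (cball x r) y * g y \<partial>nu \<partial>nu)
      = (\<integral>\<^sup>+y. \<integral>\<^sup>+x. g y * indicator (cball y r) x \<partial>nu \<partial>nu)"
    by (subst Fubini') (auto intro!: nn_integral_cong simp: indicator_def dist_commute)
  also have "\<dots> = (\<integral>\<^sup>+y. emeasure nu (cball y r) * g y \<partial>nu)"
    by (intro nn_integral_cong) (simp add: nn_integral_cmult mult.commute)
  finally show ?thesis .
qed

lemma nn_integral_cball_swap2:
  fixes nu1 nu2 :: "'a::{metric_space,second_countable_topology} measure"
  assumes "sigma_finite_measure nu1" "sigma_finite_measure nu2"
    and [measurable_cong]: "sets nu1 = sets borel" "sets nu2 = sets borel"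
    and [measurable]: "(\<lambda>(y, z). \<Psi> y z) \<in> borel_measurable (borel \<Otimes>\<^sub>M borel)"
  shows "(\<integral>\<^sup>+y. \<integral>\<^sup>+z. \<integral>\<^sup>+y'. \<integral>\<^sup>+z'. indicator (cball y r) y' * indicator (cball z r) z' * \<Psi> y' z'
            \<partial>nu2 \<partial>nu1 \<partial>nu2 \<partial>nu1)
       = (\<integral>\<^sup>+y'. \<integral>\<^sup>+z'. emeasure nu1 (cball y' r) * emeasure nu2 (cball z' r) * \<Psi> y' z' \<partial>nu2 \<partial>nu1)"
proof -
  interpret pair_sigma_finite nu1 nu2 using assms(1,2) by (simp add: pair_sigma_finite_def)
  have [measurable]: "(\<lambda>x. emeasure nu2 (cball x r)) \<in> borel_measurable borel"
    using assms(2,4) by (rule measurable_emeasure_cball)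
  define \<Phi> where "\<Phi> z y' = (\<integral>\<^sup>+z'. indicator (cball z r) z' * \<Psi> y' z' \<partial>nu2)" for z y'
  have [measurable]: "(\<lambda>x. \<Phi> (snd x) (fst x)) \<in> borel_measurable (nu1 \<Otimes>\<^sub>M nu2)"
    "(\<lambda>z. \<Phi> z y') \<in> borel_measurable borel" for y'
    unfolding \<Phi>_def by measurable
  have inner: "(\<integral>\<^sup>+z. \<integral>\<^sup>+y'. \<integral>\<^sup>+z'. indicator (cball y r) y' * indicator (cball z r) z' * \<Psi> y' z' \<partial>nu2 \<partial>nu1 \<partial>nu2)
      = (\<integral>\<^sup>+y'. indicator (cball y r) y' * (\<integral>\<^sup>+z'. emeasure nu2 (cball z' r) * \<Psi> y' z' \<partial>nu2) \<partial>nu1)" for y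
  proof -
    have "(\<integral>\<^sup>+z. \<integral>\<^sup>+y'. \<integral>\<^sup>+z'. indicator (cball y r) y' * indicator (cball z r) z' * \<Psi> y' z' \<partial>nu2 \<partial>nu1 \<partial>nu2)
        = (\<integral>\<^sup>+z. \<integral>\<^sup>+y'. indicator (cball y r) y' * \<Phi> z y' \<partial>nu1 \<partial>nu2)"
      unfolding \<Phi>_def by (simp add: nn_integral_cmult[symmetric] mult.assoc)
    also have "\<dots> = (\<integral>\<^sup>+y'. indicator (cball y r) y' * (\<integral>\<^sup>+z. \<Phi> z y' \<partial>nu2) \<partial>nu1)"
      by (subst Fubini') (auto intro!: nn_integral_cong nn_integral_cmult)
    also have "\<dots> = (\<integral>\<^sup>+y'. indicator (cball y r) y' * (\<integral>\<^sup>+z'. emeasure nu2 (cball z' r) * \<Psi> y' z' \<partial>nu2) \<partial>nu1)"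
      unfolding \<Phi>_def using assms(2,4)
      by (subst nn_integral_cball_swap) auto
    finally show ?thesis .
  qed
  have "(\<integral>\<^sup>+y. \<integral>\<^sup>+z. \<integral>\<^sup>+y'. \<integral>\<^sup>+z'. indicator (cball y r) y' * indicator (cball z r) z' * \<Psi> y' z'
            \<partial>nu2 \<partial>nu1 \<partial>nu2 \<partial>nu1)
      = (\<integral>\<^sup>+y. \<integral>\<^sup>+y'. indicator (cball y r) y' * (\<integral>\<^sup>+z'. emeasure nu2 (cball z' r) * \<Psi> y' z' \<partial>nu2) \<partial>nu1 \<partial>nu1)"
    by (simp only: inner)
  also have "\<dots> = (\<integral>\<^sup>+y'. emeasure nu1 (cball y' r) * (\<integral>\<^sup>+z'. emeasure nu2 (cball z' r) * \<Psi> y' z' \<partial>nu2) \<partial>nu1)"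
    using assms(1,3) by (rule nn_integral_cball_swap) measurable
  also have "\<dots> = (\<integral>\<^sup>+y'. \<integral>\<^sup>+z'. emeasure nu1 (cball y' r) * emeasure nu2 (cball z' r) * \<Psi> y' z' \<partial>nu2 \<partial>nu1)"
    by (intro nn_integral_cong) (simp add: nn_integral_cmult[symmetric] mult.assoc)
  finally show ?thesis .
qed

section \<open>Doubling metric measure spaces\<close>

definition ball_weight :: "'a::metric_space measure \<Rightarrow> real \<Rightarrow> 'a \<Rightarrow> 'a \<Rightarrow> ennreal" where
  "ball_weight M r y z = ennreal ((measure M (cball y r) * measure M (cball z r)) powr (-1/2))"

definition gluing_integral ::
  "'a::metric_space measure \<Rightarrow> 'a measure \<Rightarrow> 'a measure \<Rightarrow> real \<Rightarrow> ('a \<Rightarrow> 'a \<Rightarrow> ennreal) \<Rightarrow> ennreal" where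
  "gluing_integral M nu1 nu2 r g =
     (\<integral>\<^sup>+y. \<integral>\<^sup>+z. (if dist y z \<le> r then ball_weight M r y z * g y z else 0) \<partial>nu2 \<partial>nu1)"

lemma ball_weight_commute: "ball_weight M r y z = ball_weight M r z y"
  unfolding ball_weight_def by (simp add: mult.commute)

locale doubling_mms =
  fixes M :: "'a::polish_space measure" and Cd :: real
  assumes sets_M [measurable_cong]: "sets M = sets borel"
    and emeasure_cball_finite: "emeasure M (cball x r) < \<infinity>"
    and emeasure_cball_pos: "0 < r \<Longrightarrow> 0 < emeasure M (cball x r)"
    and doubling: "0 < r \<Longrightarrow> r \<le> 1 \<Longrightarrow> emeasure M (cball x (2 * r)) \<le> ennreal Cd * emeasure M (cball x r)"
    and Cd_ge_1: "1 \<le> Cd"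
begin

abbreviation ball_measure :: "'a \<Rightarrow> real \<Rightarrow> real" where
  "ball_measure x r \<equiv> measure M (cball x r)"

lemma space_M [simp]: "space M = UNIV"
  using sets_eq_imp_space_eq[OF sets_M] by simp

lemma emeasure_cball_eq: "emeasure M (cball x r) = ennreal (ball_measure x r)"
  using emeasure_cball_finite[of x r] by (simp add: emeasure_eq_ennreal_measure less_top)

lemma ball_measure_pos: "0 < r \<Longrightarrow> 0 < ball_measure x r"
  using emeasure_cball_pos[of r x] unfolding emeasure_cball_eq by simp

lemma ball_measure_mono: "cball x r \<subseteq> cball y s \<Longrightarrow> ball_measure x r \<le> ball_measure y s"
  using emeasure_mono[of "cball x r" "cball y s" M] sets_M
  by (simp add: emeasure_cball_eq)

lemma ball_measure_doubling_pow:
  "0 < r \<Longrightarrow> 2 ^ n * r \<le> 2 \<Longrightarrow> ball_measure x (2 ^ n * r) \<le> Cd ^ n * ball_measure x r"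
proof (induction n)
  case (Suc n)
  have "ball_measure x (2 * (2 ^ n * r)) \<le> Cd * ball_measure x (2 ^ n * r)"
    using doubling[of "2 ^ n * r" x] Suc.prems Cd_ge_1
    by (simp add: emeasure_cball_eq ennreal_mult[symmetric])
  also have "\<dots> \<le> Cd * (Cd ^ n * ball_measure x r)"
    using Suc Cd_ge_1 by (intro mult_left_mono) auto
  finally show ?case by (simp add: mult.assoc)
qed simp

lemma ball_measure_le_pow:
  "0 < r \<Longrightarrow> 2 ^ n * r \<le> 2 \<Longrightarrow> cball x s \<subseteq> cball y (2 ^ n * r) \<Longrightarrow>
    ball_measure x s \<le> Cd ^ n * ball_measure y r"
  using ball_measure_mono ball_measure_doubling_pow order_trans by blast

lemma sigma_finite_M: "sigma_finite_measure M"
proof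
  have "(\<Union>n::nat. cball undefined (real n)) = (UNIV :: 'a set)"
    by (auto intro: real_arch_simple)
  then show "\<exists>A. countable A \<and> A \<subseteq> sets M \<and> \<Union> A = space M \<and> (\<forall>a\<in>A. emeasure M a \<noteq> \<infinity>)"
    using emeasure_cball_finite
    by (intro exI[of _ "range (\<lambda>n::nat. cball undefined (real n))"]) (auto simp: less_top)
qed

lemma measurable_ball_measure [measurable]: "(\<lambda>x. ball_measure x r) \<in> borel_measurable borel"
  using measurable_emeasure_cball[OF sigma_finite_M sets_M, of r]
  unfolding emeasure_cball_eq by (subst measurable_cong_simp) (auto intro: borel_measurable_enn2real)

lemma measurable_ball_weight [measurable]:
  "(\<lambda>(y, z). ball_weight M r y z) \<in> borel_measurable (borel \<Otimes>\<^sub>M borel)"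
  unfolding ball_weight_def by measurable

lemma ball_weight_le_shift:
  assumes r: "0 < r" "r \<le> 1/4" and near: "dist y y' \<le> r" "dist z z' \<le> r"
  shows "ball_weight M r y z \<le> ennreal (Cd ^ 3) * ball_weight M (4 * r) y' z'"
proof -
  have sub: "cball x' (4 * r) \<subseteq> cball x (2 ^ 3 * r)" if "dist x x' \<le> r" for x x'
    using that r by (intro cball_subset_cball_shift) auto
  have "ball_measure y' (4 * r) * ball_measure z' (4 * r) \<le> (Cd ^ 3 * ball_measure y r) * (Cd ^ 3 * ball_measure z r)"
    using r near sub ball_measure_pos[of "4 * r"] Cd_ge_1
    by (intro mult_mono ball_measure_le_pow[of r 3]) (auto simp: less_imp_le)
  then have "(ball_measure y r * ball_measure z r) powr (-1/2)
      \<le> Cd ^ 3 * (ball_measure y' (4 * r) * ball_measure z' (4 * r)) powr (-1/2)"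
    using r Cd_ge_1 ball_measure_pos
    by (intro powr_neg_half_le) (auto simp: power2_eq_square algebra_simps)
  then show ?thesis
    unfolding ball_weight_def using Cd_ge_1 by (simp add: ennreal_mult[symmetric] ennreal_leI)
qed

end

lemma emeasure_cball_finite_if_doubling:
  assumes borel: "sets M = sets borel" and locfin: "locally_finite_msr M" and doubling: "unif_loc_doubling M"
  shows "emeasure M (cball x r) < \<infinity>"
proof -
  obtain e where e: "0 < e" "emeasure M (ball x e) < \<infinity>"
    using locfin unfolding locally_finite_msr_def by blast
  have grow: "emeasure M (cball x (e / 2 * 2 ^ n)) < \<infinity>" for n
  proof (induction n)
    case 0
    have "emeasure M (cball x (e / 2)) \<le> emeasure M (ball x e)"
      using e by (intro emeasure_mono) (auto simp: borel)
    then show ?case using e by simp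
  next
    case (Suc n)
    have \<rho>: "0 < e / 2 * 2 ^ n" using e by simp
    then obtain C where "\<forall>r x. 0 < r \<and> r \<le> e / 2 * 2 ^ n \<longrightarrow>
        emeasure M (cball x (2 * r)) \<le> ennreal C * emeasure M (cball x r)"
      using doubling unfolding unif_loc_doubling_def by blast
    then have "emeasure M (cball x (2 * (e / 2 * 2 ^ n))) \<le> ennreal C * emeasure M (cball x (e / 2 * 2 ^ n))"
      using \<rho> by blast
    also have "\<dots> < \<infinity>" using Suc by (simp add: ennreal_mult_less_top)
    finally show ?case by (simp add: mult_ac)
  qed
  obtain n where "2 * r / e < 2 ^ n" using real_arch_pow[of 2 "2 * r / e"] by auto
  then have "emeasure M (cball x r) \<le> emeasure M (cball x (e / 2 * 2 ^ n))"
    using e by (intro emeasure_mono) (auto simp: borel field_simps)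
  then show ?thesis using grow[of n] by simp
qed

lemma doubling_mms_exists:
  fixes M :: "'a::polish_space measure"
  assumes borel: "sets M = sets borel" and locfin: "locally_finite_msr M"
    and supp: "full_support M" and doubling: "unif_loc_doubling M"
  shows "\<exists>Cd. doubling_mms M Cd"
proof -
  obtain C where C: "\<And>r x. 0 < r \<Longrightarrow> r \<le> 1 \<Longrightarrow> emeasure M (cball x (2 * r)) \<le> ennreal C * emeasure M (cball x r)"
    using doubling unfolding unif_loc_doubling_def by (metis zero_less_one)
  have pos: "0 < emeasure M (cball x r)" if "0 < r" for x r
  proof -
    have "0 < emeasure M (ball x r)" using supp that unfolding full_support_def by blast
    also have "\<dots> \<le> emeasure M (cball x r)" by (intro emeasure_mono) (auto simp: borel)
    finally show ?thesis .
  qed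
  have "doubling_mms M (max C 1)"
  proof
    show "emeasure M (cball x (2 * r)) \<le> ennreal (max C 1) * emeasure M (cball x r)" if "0 < r" "r \<le> 1" for x r
      using C[OF that, of x] by (rule order_trans) (intro mult_right_mono ennreal_leI, auto)
  qed (use borel pos emeasure_cball_finite_if_doubling[OF borel locfin doubling] in auto)
  then show ?thesis by blast
qed

section \<open>Ahlfors-David regular measures\<close>

locale ADR_measure = doubling_mms M Cd for M :: "'a::polish_space measure" and Cd :: real +
  fixes \<theta> :: real and S :: "'a set" and nu :: "'a measure" and c1 c2 :: real
  assumes sets_nu [measurable_cong]: "sets nu = sets borel"
    and closed_S: "closed S"
    and null_outside_S: "emeasure nu (- S) = 0"
    and c1_pos: "0 < c1" and c2_pos: "0 < c2"
    and lower_bound: "x \<in> S \<Longrightarrow> 0 < r \<Longrightarrow> r \<le> 1 \<Longrightarrow>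
      ennreal (c1 * ball_measure x r * r powr - \<theta>) \<le> emeasure nu (cball x r)"
    and upper_bound: "x \<in> S \<Longrightarrow> 0 < r \<Longrightarrow> r \<le> 1 \<Longrightarrow>
      emeasure nu (cball x r) \<le> ennreal (c2 * ball_measure x r * r powr - \<theta>)"
begin

lemma space_nu [simp]: "space nu = UNIV"
  using sets_eq_imp_space_eq[OF sets_nu] by simp

lemma AE_in_S: "AE x in nu. x \<in> S"
  using closed_S null_outside_S by (intro AE_I[of _ _ "- S"]) (auto simp: borel_closed)

lemma emeasure_nu_cball_finite: "x \<in> S \<Longrightarrow> 0 < r \<Longrightarrow> r \<le> 1 \<Longrightarrow> emeasure nu (cball x r) < \<infinity>"
  using upper_bound[of x r] by (simp add: le_less_trans)

lemma emeasure_nu_cball_pos: "x \<in> S \<Longrightarrow> 0 < r \<Longrightarrow> r \<le> 1 \<Longrightarrow> 0 < emeasure nu (cball x r)"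
proof -
  assume x: "x \<in> S" "0 < r" "r \<le> 1"
  then have "0 < ennreal (c1 * ball_measure x r * r powr - \<theta>)" using c1_pos ball_measure_pos by simp
  then show ?thesis using lower_bound[OF x] by (rule less_le_trans)
qed

sublocale nu: sigma_finite_measure nu
proof
  obtain F where F: "F \<subseteq> (\<lambda>x. ball x 1) ` S" "countable F" "\<Union>F = (\<Union>x\<in>S. ball x 1)"
    using Lindelof[of "(\<lambda>x. ball x 1) ` S"] by auto
  then obtain C where C: "countable C" "C \<subseteq> S" "F = (\<lambda>x. ball x 1) ` C"
    using countable_subset_image[of F "\<lambda>x. ball x 1" S] by blast
  let ?A = "insert (- S) ((\<lambda>x. cball x 1) ` C)"
  have UN_eq: "(\<Union>c\<in>C. ball c 1) = (\<Union>x\<in>S. ball x 1)" using F(3) by (simp only: C(3))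
  have "S \<subseteq> (\<Union>x\<in>C. cball x 1)"
  proof
    fix x assume "x \<in> S"
    then have "x \<in> (\<Union>x\<in>S. ball x 1)" by (intro UN_I) auto
    then have "x \<in> (\<Union>c\<in>C. ball c 1)" unfolding UN_eq .
    then obtain c where "c \<in> C" "x \<in> ball c 1" by (rule UN_E)
    then show "x \<in> (\<Union>x\<in>C. cball x 1)" using ball_subset_cball by blast
  qed
  then have union: "\<Union> ?A = space nu" by auto
  have finite: "\<forall>a\<in>?A. emeasure nu a \<noteq> \<infinity>"
    using C(2) emeasure_nu_cball_finite[of _ 1] null_outside_S by fastforce
  have "?A \<subseteq> sets nu" using closed_S by (auto simp: borel_closed)
  then show "\<exists>A. countable A \<and> A \<subseteq> sets nu \<and> \<Union> A = space nu \<and> (\<forall>a\<in>A. emeasure nu a \<noteq> \<infinity>)"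
    using C(1) union finite by (intro exI[of _ ?A]) simp
qed

lemma measurable_emeasure_nu_cball [measurable]: "(\<lambda>x. emeasure nu (cball x r)) \<in> borel_measurable borel"
  using nu.sigma_finite_measure_axioms sets_nu by (rule measurable_emeasure_cball)

definition ball_ratio :: real where
  "ball_ratio = Cd * c2 * 2 powr - \<theta> / c1"

lemma ball_ratio_pos: "0 < ball_ratio"
  unfolding ball_ratio_def using Cd_ge_1 c1_pos c2_pos by simp

lemma emeasure_nu_cball_shift_le:
  assumes "x \<in> S" "dist x y \<le> r" "0 < r" "r \<le> 1/2"
  shows "emeasure nu (cball y r) \<le> ennreal ball_ratio * emeasure nu (cball x r)"
proof -
  have "emeasure nu (cball y r) \<le> emeasure nu (cball x (2 * r))"
    using assms(2) by (intro emeasure_mono cball_subset_cball_shift) auto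
  also have "\<dots> \<le> ennreal (c2 * ball_measure x (2 * r) * (2 * r) powr - \<theta>)"
    using assms by (intro upper_bound) auto
  also have "\<dots> \<le> ennreal (ball_ratio * (c1 * ball_measure x r * r powr - \<theta>))"
  proof (intro ennreal_leI)
    have "ball_measure x (2 * r) \<le> Cd * ball_measure x r"
      using ball_measure_doubling_pow[of r 1 x] assms by simp
    then show "c2 * ball_measure x (2 * r) * (2 * r) powr - \<theta> \<le> ball_ratio * (c1 * ball_measure x r * r powr - \<theta>)"
      using assms c1_pos c2_pos unfolding ball_ratio_def
      by (simp add: powr_mult mult_right_mono field_simps)
  qed
  also have "\<dots> = ennreal ball_ratio * ennreal (c1 * ball_measure x r * r powr - \<theta>)"
    using ball_ratio_pos c1_pos by (intro ennreal_mult) auto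
  also have "\<dots> \<le> ennreal ball_ratio * emeasure nu (cball x r)"
    using assms by (intro mult_left_mono lower_bound) auto
  finally show ?thesis .
qed

lemma inverse_emeasure_nu_cball_le:
  assumes "x \<in> S" "dist x y \<le> r" "0 < r" "r \<le> 1/2"
  shows "inverse (emeasure nu (cball x r)) \<le> ennreal ball_ratio * inverse (emeasure nu (cball y r))"
proof -
  obtain v where v: "emeasure nu (cball x r) = ennreal v" "0 < v"
    using emeasure_nu_cball_pos[of x r] emeasure_nu_cball_finite[of x r] assms
    by (cases "emeasure nu (cball x r)" rule: ennreal_cases) auto
  have shift: "emeasure nu (cball y r) \<le> ennreal (ball_ratio * v)"
    using emeasure_nu_cball_shift_le[OF assms] v ball_ratio_pos by (simp add: ennreal_mult)
  show ?thesis
  proof (cases "emeasure nu (cball y r) = 0")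
    case True
    then show ?thesis using ball_ratio_pos by (simp add: ennreal_mult_top)
  next
    case False
    then obtain u where u: "emeasure nu (cball y r) = ennreal u" "0 < u"
      using shift by (cases "emeasure nu (cball y r)" rule: ennreal_cases) (auto simp: top_unique)
    have "inverse v \<le> ball_ratio * inverse u"
      using shift u v ball_ratio_pos by (simp add: field_simps)
    then show ?thesis
      using u v ball_ratio_pos by (simp add: inverse_ennreal ennreal_mult[symmetric])
  qed
qed

lemma Av_cball_eq:
  assumes "x \<in> S" "0 < r" "r \<le> 1" "g \<in> borel_measurable borel"
  shows "Av nu (cball x r) g = (\<integral>\<^sup>+y. indicator (cball x r) y * inverse (emeasure nu (cball x r)) * g y \<partial>nu)"
  using assms emeasure_nu_cball_pos[of x r]
  by (intro Av_eq_nn_integral) (auto simp: measurable_cong_sets[OF sets_nu refl])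

lemma measurable_Av_cball [measurable]:
  assumes [measurable]: "F \<in> borel_measurable borel"
  shows "(\<lambda>x. Av nu (cball x r) F) \<in> borel_measurable borel"
  unfolding Av_def by measurable

lemma nn_integral_Av_cball_le:
  assumes r: "0 < r" "r \<le> 1/2" and [measurable]: "F \<in> borel_measurable borel"
  shows "(\<integral>\<^sup>+x. Av nu (cball x r) F \<partial>nu) \<le> ennreal ball_ratio * (\<integral>\<^sup>+x. F x \<partial>nu)"
proof -
  let ?g = "\<lambda>y. ennreal ball_ratio * inverse (emeasure nu (cball y r)) * F y"
  have "(\<integral>\<^sup>+x. Av nu (cball x r) F \<partial>nu) \<le> (\<integral>\<^sup>+x. \<integral>\<^sup>+y. indicator (cball x r) y * ?g y \<partial>nu \<partial>nu)"
  proof (rule nn_integral_mono_AE)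
    show "AE x in nu. Av nu (cball x r) F \<le> (\<integral>\<^sup>+y. indicator (cball x r) y * ?g y \<partial>nu)"
      using AE_in_S
    proof eventually_elim
      case (elim x)
      have "indicator (cball x r) y * inverse (emeasure nu (cball x r)) * F y \<le> indicator (cball x r) y * ?g y" for y
        using inverse_emeasure_nu_cball_le[OF elim _ r]
        by (cases "y \<in> cball x r") (auto intro: mult_right_mono)
      then show ?case
        using elim r by (simp add: Av_cball_eq nn_integral_mono)
    qed
  qed
  also have "\<dots> = (\<integral>\<^sup>+y. emeasure nu (cball y r) * ?g y \<partial>nu)"
    using nu.sigma_finite_measure_axioms sets_nu by (rule nn_integral_cball_swap) measurable
  also have "\<dots> \<le> (\<integral>\<^sup>+y. ennreal ball_ratio * F y \<partial>nu)"
  proof (intro nn_integral_mono)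
    fix y
    have "emeasure nu (cball y r) * ?g y = ennreal ball_ratio * (emeasure nu (cball y r) * inverse (emeasure nu (cball y r))) * F y"
      by (simp add: mult_ac)
    also have "\<dots> \<le> ennreal ball_ratio * 1 * F y"
      by (intro mult_right_mono mult_left_mono ennreal_mult_inverse_le) auto
    finally show "emeasure nu (cball y r) * ?g y \<le> ennreal ball_ratio * F y" by simp
  qed
  also have "\<dots> = ennreal ball_ratio * (\<integral>\<^sup>+x. F x \<partial>nu)"
    by (rule nn_integral_cmult) measurable
  finally show ?thesis .
qed

lemma nn_integral_ball_weight_le:
  assumes r: "0 < r" "r \<le> 1/2"
  shows "(\<integral>\<^sup>+z. (if dist y z \<le> r then ball_weight M r y z else 0) \<partial>nu) \<le> ennreal (c2 * Cd\<^sup>2 * (2 * r) powr - \<theta>)"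
proof (cases "\<exists>z0\<in>S. dist y z0 \<le> r")
  case True
  then obtain z0 where z0: "z0 \<in> S" "dist y z0 \<le> r" by blast
  define a where "a = ball_measure z0 (2 * r) / Cd\<^sup>2"
  have a: "0 < a" using ball_measure_pos[of "2 * r" z0] r Cd_ge_1 unfolding a_def by simp
  have a_le: "a \<le> ball_measure x r" if "dist y x \<le> r" for x
  proof -
    have "cball z0 (2 * r) \<subseteq> cball x (2 ^ 2 * r)"
      using that z0 dist_triangle[of x z0 y] by (intro cball_subset_cball_shift) (simp add: dist_commute)
    then have "ball_measure z0 (2 * r) \<le> Cd\<^sup>2 * ball_measure x r"
      using r by (intro ball_measure_le_pow) auto
    then show ?thesis using Cd_ge_1 unfolding a_def by (simp add: field_simps)
  qed
  have "(if dist y z \<le> r then ball_weight M r y z else 0) \<le> ennreal (1 / a) * indicator (cball y r) z" for z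
  proof (cases "dist y z \<le> r")
    case True
    then have "(ball_measure y r * ball_measure z r) powr (-1/2) \<le> 1 / a"
      using a a_le[of y] a_le[of z] r by (intro powr_neg_half_le_inverse) auto
    then show ?thesis using True unfolding ball_weight_def by (simp add: ennreal_leI)
  qed simp
  then have "(\<integral>\<^sup>+z. (if dist y z \<le> r then ball_weight M r y z else 0) \<partial>nu)
      \<le> ennreal (1 / a) * emeasure nu (cball y r)"
    by (subst nn_integral_cmult_indicator[symmetric]) (auto intro: nn_integral_mono)
  also have "\<dots> \<le> ennreal (1 / a) * emeasure nu (cball z0 (2 * r))"
    using z0(2) cball_subset_cball_shift[of z0 y r "2 * r"]
    by (intro mult_left_mono emeasure_mono) (auto simp: dist_commute)
  also have "\<dots> \<le> ennreal (1 / a) * ennreal (c2 * ball_measure z0 (2 * r) * (2 * r) powr - \<theta>)"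
    using r z0 by (intro mult_left_mono upper_bound) auto
  also have "\<dots> = ennreal (c2 * Cd\<^sup>2 * (2 * r) powr - \<theta>)"
    using a ball_measure_pos[of "2 * r" z0] r c2_pos Cd_ge_1
    by (simp add: ennreal_mult[symmetric] a_def field_simps)
  finally show ?thesis .
next
  case False
  have "AE z in nu. (if dist y z \<le> r then ball_weight M r y z else 0) = 0"
    using AE_in_S by eventually_elim (use False in auto)
  then show ?thesis by (simp add: nn_integral_0_iff_AE[THEN iffD2])
qed

end

section \<open>Pairs of regular measures\<close>

definition ball_mean_diff ::
  "'a::metric_space measure \<Rightarrow> 'a measure \<Rightarrow> real \<Rightarrow> ('a \<Rightarrow> real) \<Rightarrow> 'a \<Rightarrow> 'a \<Rightarrow> ennreal" where
  "ball_mean_diff nu1 nu2 r f y z =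
     Av nu1 (cball y r) (\<lambda>y'. Av nu2 (cball z r) (\<lambda>z'. ennreal \<bar>f y' - f z'\<bar>))"

definition gluing_series ::
  "real \<Rightarrow> 'a::metric_space measure \<Rightarrow> real \<Rightarrow> 'a measure \<Rightarrow> real \<Rightarrow> 'a measure \<Rightarrow>
    (nat \<Rightarrow> 'a \<Rightarrow> 'a \<Rightarrow> ennreal) \<Rightarrow> ennreal" where
  "gluing_series p M \<theta>1 nu1 \<theta>2 nu2 g =
     (\<Sum>k. ennreal (2 powr (real (Suc k) * (p - \<theta>1 - \<theta>2))) *
        gluing_integral M nu1 nu2 (2 powr - real (Suc k)) (g (Suc k)))"

locale ADR_pair = nu1: ADR_measure M Cd \<theta>1 S1 nu1 a1 b1 + nu2: ADR_measure M Cd \<theta>2 S2 nu2 a2 b2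
  for M :: "'a::polish_space measure" and Cd \<theta>1 S1 nu1 a1 b1 \<theta>2 S2 nu2 a2 b2 +
  fixes p :: real
  assumes p_gt_1: "1 < p"
begin

sublocale pair_sigma_finite nu1 nu2
  by (simp add: pair_sigma_finite_def nu1.nu.sigma_finite_measure_axioms nu2.nu.sigma_finite_measure_axioms)

lemma nn_integral2_mono_on_S:
  assumes "\<And>y z. y \<in> S1 \<Longrightarrow> z \<in> S2 \<Longrightarrow> u y z \<le> v y z"
  shows "(\<integral>\<^sup>+y. \<integral>\<^sup>+z. u y z \<partial>nu2 \<partial>nu1) \<le> (\<integral>\<^sup>+y. \<integral>\<^sup>+z. v y z \<partial>nu2 \<partial>nu1)"
proof (rule nn_integral_mono_AE)
  show "AE y in nu1. (\<integral>\<^sup>+z. u y z \<partial>nu2) \<le> (\<integral>\<^sup>+z. v y z \<partial>nu2)"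
    using nu1.AE_in_S
  proof eventually_elim
    case (elim y)
    show ?case
      using nu2.AE_in_S by (intro nn_integral_mono_AE) (auto elim!: eventually_mono intro: assms elim)
  qed
qed

lemma gluing_integral_mono:
  assumes "\<And>y z. y \<in> S1 \<Longrightarrow> z \<in> S2 \<Longrightarrow> dist y z \<le> r \<Longrightarrow> g y z \<le> h y z"
  shows "gluing_integral M nu1 nu2 r g \<le> gluing_integral M nu1 nu2 r h"
  unfolding gluing_integral_def using assms by (intro nn_integral2_mono_on_S) (auto intro: mult_left_mono)

lemma gluing_integral_add:
  assumes [measurable]: "(\<lambda>(y, z). g y z) \<in> borel_measurable (borel \<Otimes>\<^sub>M borel)"
    "(\<lambda>(y, z). h y z) \<in> borel_measurable (borel \<Otimes>\<^sub>M borel)"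
  shows "gluing_integral M nu1 nu2 r (\<lambda>y z. g y z + h y z)
       = gluing_integral M nu1 nu2 r g + gluing_integral M nu1 nu2 r h"
  unfolding gluing_integral_def
  by (simp add: if_distrib[of "\<lambda>x. x + _"] distrib_left nn_integral_add[symmetric] cong: if_cong)

lemma gluing_integral_cmult:
  assumes [measurable]: "(\<lambda>(y, z). g y z) \<in> borel_measurable (borel \<Otimes>\<^sub>M borel)"
  shows "gluing_integral M nu1 nu2 r (\<lambda>y z. c * g y z) = c * gluing_integral M nu1 nu2 r g"
  unfolding gluing_integral_def
  by (simp add: nn_integral_cmult[symmetric] mult.left_commute if_distrib[of "\<lambda>x. c * x"] cong: if_cong)

lemma measurable_Av_nu2 [measurable]:
  assumes [measurable]: "(\<lambda>(y, z). g y z) \<in> borel_measurable (borel \<Otimes>\<^sub>M borel)"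
  shows "(\<lambda>y. Av nu2 (cball z r) (g y)) \<in> borel_measurable borel"
  using nu2.nu.sigma_finite_measure_axioms by (rule measurable_Av) measurable

lemma epowr_ball_mean_diff_le:
  assumes [measurable]: "f \<in> borel_measurable borel"
    and yz: "y \<in> S1" "z \<in> S2" and r: "0 < r" "r \<le> 1"
  shows "epowr (ball_mean_diff nu1 nu2 r f y z) p
    \<le> Av nu1 (cball y r) (\<lambda>y'. Av nu2 (cball z r) (\<lambda>z'. ennreal (\<bar>f y' - f z'\<bar> powr p)))"
proof -
  have "epowr (ball_mean_diff nu1 nu2 r f y z) p
      \<le> Av nu1 (cball y r) (\<lambda>y'. epowr (Av nu2 (cball z r) (\<lambda>z'. ennreal \<bar>f y' - f z'\<bar>)) p)"
    unfolding ball_mean_diff_def using p_gt_1 nu1.emeasure_nu_cball_finite[OF yz(1) r]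
    by (intro epowr_Av_le) (auto simp: measurable_cong_sets[OF nu1.sets_nu refl])
  also have "\<dots> \<le> Av nu1 (cball y r) (\<lambda>y'. Av nu2 (cball z r) (\<lambda>z'. epowr (ennreal \<bar>f y' - f z'\<bar>) p))"
    using p_gt_1 nu2.emeasure_nu_cball_finite[OF yz(2) r]
    by (intro Av_mono epowr_Av_le) (auto simp: measurable_cong_sets[OF nu2.sets_nu refl])
  finally show ?thesis by (simp add: epowr_ennreal)
qed

lemma Av_Av_cball_eq:
  assumes [measurable]: "(\<lambda>(y, z). g y z) \<in> borel_measurable (borel \<Otimes>\<^sub>M borel)"
    and yz: "y \<in> S1" "z \<in> S2" and r: "0 < r" "r \<le> 1"
  shows "Av nu1 (cball y r) (\<lambda>y'. Av nu2 (cball z r) (g y'))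
    = (\<integral>\<^sup>+y'. \<integral>\<^sup>+z'. indicator (cball y r) y' * indicator (cball z r) z' *
         (inverse (emeasure nu1 (cball y r)) * inverse (emeasure nu2 (cball z r))) * g y' z' \<partial>nu2 \<partial>nu1)"
proof -
  have "Av nu1 (cball y r) (\<lambda>y'. Av nu2 (cball z r) (g y'))
      = (\<integral>\<^sup>+y'. indicator (cball y r) y' * inverse (emeasure nu1 (cball y r)) *
           (\<integral>\<^sup>+z'. indicator (cball z r) z' * inverse (emeasure nu2 (cball z r)) * g y' z' \<partial>nu2) \<partial>nu1)"
    using yz r by (simp add: nu1.Av_cball_eq nu2.Av_cball_eq)
  then show ?thesis
    by (simp add: nn_integral_cmult[symmetric] mult_ac)
qed

lemma ball_weight_inverse_shift_le:
  assumes yz: "y \<in> S1" "z \<in> S2" and near: "dist y y' \<le> r" "dist z z' \<le> r"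
    and r: "0 < r" "r \<le> 1/4"
  shows "ball_weight M r y z * (inverse (emeasure nu1 (cball y r)) * inverse (emeasure nu2 (cball z r)))
    \<le> ennreal (Cd ^ 3 * nu1.ball_ratio * nu2.ball_ratio) *
       (ball_weight M (4 * r) y' z' * (inverse (emeasure nu1 (cball y' r)) * inverse (emeasure nu2 (cball z' r))))"
proof -
  have "ball_weight M r y z * (inverse (emeasure nu1 (cball y r)) * inverse (emeasure nu2 (cball z r)))
      \<le> (ennreal (Cd ^ 3) * ball_weight M (4 * r) y' z') *
         ((ennreal nu1.ball_ratio * inverse (emeasure nu1 (cball y' r))) *
          (ennreal nu2.ball_ratio * inverse (emeasure nu2 (cball z' r))))"
    using yz near r
    by (intro mult_mono nu1.ball_weight_le_shift nu1.inverse_emeasure_nu_cball_le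
        nu2.inverse_emeasure_nu_cball_le) auto
  also have "\<dots> = ennreal (Cd ^ 3 * nu1.ball_ratio * nu2.ball_ratio) *
       (ball_weight M (4 * r) y' z' * (inverse (emeasure nu1 (cball y' r)) * inverse (emeasure nu2 (cball z' r))))"
    using nu1.Cd_ge_1 nu1.ball_ratio_pos nu2.ball_ratio_pos by (simp add: ennreal_mult mult_ac)
  finally show ?thesis .
qed

definition shifted_kernel :: "real \<Rightarrow> ('a \<Rightarrow> real) \<Rightarrow> 'a \<Rightarrow> 'a \<Rightarrow> ennreal" where
  "shifted_kernel r f y' z' = (if dist y' z' \<le> 4 * r then
     ball_weight M (4 * r) y' z' * (inverse (emeasure nu1 (cball y' r)) * inverse (emeasure nu2 (cball z' r))) *
     ennreal (\<bar>f y' - f z'\<bar> powr p) else 0)"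

lemma measurable_shifted_kernel [measurable]:
  assumes [measurable]: "f \<in> borel_measurable borel"
  shows "(\<lambda>(y, z). shifted_kernel r f y z) \<in> borel_measurable (borel \<Otimes>\<^sub>M borel)"
  unfolding shifted_kernel_def by measurable

lemma weighted_mean_diff_le_shifted_kernel:
  assumes [measurable]: "f \<in> borel_measurable borel"
    and yz: "y \<in> S1" "z \<in> S2" "dist y z \<le> r" and r: "0 < r" "r \<le> 1/4"
  shows "ball_weight M r y z * epowr (ball_mean_diff nu1 nu2 r f y z) p
    \<le> ennreal (Cd ^ 3 * nu1.ball_ratio * nu2.ball_ratio) *
       (\<integral>\<^sup>+y'. \<integral>\<^sup>+z'. indicator (cball y r) y' * indicator (cball z r) z' * shifted_kernel r f y' z' \<partial>nu2 \<partial>nu1)"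
proof -
  let ?C = "ennreal (Cd ^ 3 * nu1.ball_ratio * nu2.ball_ratio)"
  let ?k = "inverse (emeasure nu1 (cball y r)) * inverse (emeasure nu2 (cball z r))"
  let ?G = "\<lambda>y' z'. ennreal (\<bar>f y' - f z'\<bar> powr p)"
  have "ball_weight M r y z * epowr (ball_mean_diff nu1 nu2 r f y z) p
      \<le> ball_weight M r y z * (\<integral>\<^sup>+y'. \<integral>\<^sup>+z'. indicator (cball y r) y' * indicator (cball z r) z' * ?k * ?G y' z' \<partial>nu2 \<partial>nu1)"
    using epowr_ball_mean_diff_le[of f y z r] Av_Av_cball_eq[of ?G y z r] yz r by (intro mult_left_mono) auto
  also have "\<dots> = (\<integral>\<^sup>+y'. \<integral>\<^sup>+z'. indicator (cball y r) y' * indicator (cball z r) z' *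
      (ball_weight M r y z * ?k) * ?G y' z' \<partial>nu2 \<partial>nu1)"
    by (simp add: nn_integral_cmult[symmetric] mult_ac)
  also have "\<dots> \<le> (\<integral>\<^sup>+y'. \<integral>\<^sup>+z'. ?C * (indicator (cball y r) y' * indicator (cball z r) z' * shifted_kernel r f y' z') \<partial>nu2 \<partial>nu1)"
  proof (intro nn_integral_mono)
    fix y' z'
    show "indicator (cball y r) y' * indicator (cball z r) z' * (ball_weight M r y z * ?k) * ?G y' z'
        \<le> ?C * (indicator (cball y r) y' * indicator (cball z r) z' * shifted_kernel r f y' z')"
    proof (cases "y' \<in> cball y r \<and> z' \<in> cball z r")
      case True
      have "dist y' z' \<le> 4 * r"
        using True yz(3) dist_triangle[of y' z' y] dist_triangle[of y z' z] r by (simp add: dist_commute)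
      moreover have "dist y y' \<le> r" "dist z z' \<le> r" using True by auto
      then have "ball_weight M r y z * ?k * ?G y' z'
          \<le> ?C * (ball_weight M (4 * r) y' z' * (inverse (emeasure nu1 (cball y' r)) *
              inverse (emeasure nu2 (cball z' r)))) * ?G y' z'"
        by (intro mult_right_mono ball_weight_inverse_shift_le yz r) auto
      ultimately show ?thesis
        using True by (simp add: shifted_kernel_def mult_ac)
    qed auto
  qed
  also have "\<dots> = ?C * (\<integral>\<^sup>+y'. \<integral>\<^sup>+z'. indicator (cball y r) y' * indicator (cball z r) z' * shifted_kernel r f y' z' \<partial>nu2 \<partial>nu1)"
    by (simp add: nn_integral_cmult)
  finally show ?thesis .
qed

lemma gluing_integral_mean_diff_le_rescaled:
  assumes [measurable]: "f \<in> borel_measurable borel" and r: "0 < r" "r \<le> 1/4"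
  shows "gluing_integral M nu1 nu2 r (\<lambda>y z. epowr (ball_mean_diff nu1 nu2 r f y z) p)
    \<le> ennreal (Cd ^ 3 * nu1.ball_ratio * nu2.ball_ratio) *
       gluing_integral M nu1 nu2 (4 * r) (\<lambda>y z. ennreal (\<bar>f y - f z\<bar> powr p))"
proof -
  let ?C = "ennreal (Cd ^ 3 * nu1.ball_ratio * nu2.ball_ratio)"
  let ?K = "shifted_kernel r f"
  have "gluing_integral M nu1 nu2 r (\<lambda>y z. epowr (ball_mean_diff nu1 nu2 r f y z) p)
      \<le> (\<integral>\<^sup>+y. \<integral>\<^sup>+z. ?C * (\<integral>\<^sup>+y'. \<integral>\<^sup>+z'. indicator (cball y r) y' * indicator (cball z r) z' * ?K y' z'
            \<partial>nu2 \<partial>nu1) \<partial>nu2 \<partial>nu1)"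
    unfolding gluing_integral_def
  proof (intro nn_integral2_mono_on_S)
    fix y z assume "y \<in> S1" "z \<in> S2"
    then show "(if dist y z \<le> r then ball_weight M r y z * epowr (ball_mean_diff nu1 nu2 r f y z) p else 0)
      \<le> ?C * (\<integral>\<^sup>+y'. \<integral>\<^sup>+z'. indicator (cball y r) y' * indicator (cball z r) z' * ?K y' z' \<partial>nu2 \<partial>nu1)"
      using weighted_mean_diff_le_shifted_kernel[of f y z r] r by simp
  qed
  also have "\<dots> = ?C * (\<integral>\<^sup>+y. \<integral>\<^sup>+z. \<integral>\<^sup>+y'. \<integral>\<^sup>+z'. indicator (cball y r) y' * indicator (cball z r) z' * ?K y' z'
            \<partial>nu2 \<partial>nu1 \<partial>nu2 \<partial>nu1)"
    by (simp add: nn_integral_cmult)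
  also have "\<dots> = ?C * (\<integral>\<^sup>+y'. \<integral>\<^sup>+z'. emeasure nu1 (cball y' r) * emeasure nu2 (cball z' r) * ?K y' z' \<partial>nu2 \<partial>nu1)"
    using nn_integral_cball_swap2[OF nu1.nu.sigma_finite_measure_axioms nu2.nu.sigma_finite_measure_axioms
        nu1.sets_nu nu2.sets_nu measurable_shifted_kernel] by simp
  also have "\<dots> \<le> ?C * gluing_integral M nu1 nu2 (4 * r) (\<lambda>y z. ennreal (\<bar>f y - f z\<bar> powr p))"
    unfolding gluing_integral_def
  proof (intro mult_left_mono nn_integral_mono)
    fix y' z'
    let ?V1 = "emeasure nu1 (cball y' r)" and ?V2 = "emeasure nu2 (cball z' r)"
    have "?V1 * ?V2 * ?K y' z' = (?V1 * inverse ?V1) * (?V2 * inverse ?V2) *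
        (if dist y' z' \<le> 4 * r then ball_weight M (4 * r) y' z' * ennreal (\<bar>f y' - f z'\<bar> powr p) else 0)"
      by (simp add: shifted_kernel_def mult_ac)
    also have "\<dots> \<le> 1 * 1 * (if dist y' z' \<le> 4 * r then ball_weight M (4 * r) y' z' * ennreal (\<bar>f y' - f z'\<bar> powr p) else 0)"
      by (intro mult_mono ennreal_mult_inverse_le) auto
    finally show "?V1 * ?V2 * ?K y' z'
        \<le> (if dist y' z' \<le> 4 * r then ball_weight M (4 * r) y' z' * ennreal (\<bar>f y' - f z'\<bar> powr p) else 0)"
      by simp
  qed simp
  finally show ?thesis .
qed

lemma gluing_integral_left_le:
  assumes [measurable]: "h \<in> borel_measurable borel" and r: "0 < r" "r \<le> 1/2"
  shows "gluing_integral M nu1 nu2 r (\<lambda>y z. h y) \<le> ennreal (b2 * Cd\<^sup>2 * (2 * r) powr - \<theta>2) * (\<integral>\<^sup>+y. h y \<partial>nu1)"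
proof -
  have "gluing_integral M nu1 nu2 r (\<lambda>y z. h y)
      = (\<integral>\<^sup>+y. (\<integral>\<^sup>+z. (if dist y z \<le> r then ball_weight M r y z else 0) \<partial>nu2) * h y \<partial>nu1)"
    unfolding gluing_integral_def
    by (intro nn_integral_cong) (simp add: nn_integral_multc[symmetric] if_distrib[of "\<lambda>x. x * _"] cong: if_cong)
  also have "\<dots> \<le> (\<integral>\<^sup>+y. ennreal (b2 * Cd\<^sup>2 * (2 * r) powr - \<theta>2) * h y \<partial>nu1)"
    using r by (intro nn_integral_mono mult_right_mono nu2.nn_integral_ball_weight_le) auto
  also have "\<dots> = ennreal (b2 * Cd\<^sup>2 * (2 * r) powr - \<theta>2) * (\<integral>\<^sup>+y. h y \<partial>nu1)"
    by (rule nn_integral_cmult) measurable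
  finally show ?thesis .
qed

lemma gluing_integral_right_le:
  assumes [measurable]: "h \<in> borel_measurable borel" and r: "0 < r" "r \<le> 1/2"
  shows "gluing_integral M nu1 nu2 r (\<lambda>y z. h z) \<le> ennreal (b1 * Cd\<^sup>2 * (2 * r) powr - \<theta>1) * (\<integral>\<^sup>+z. h z \<partial>nu2)"
proof -
  have "gluing_integral M nu1 nu2 r (\<lambda>y z. h z)
      = (\<integral>\<^sup>+z. \<integral>\<^sup>+y. (if dist y z \<le> r then ball_weight M r y z * h z else 0) \<partial>nu1 \<partial>nu2)"
    unfolding gluing_integral_def by (rule Fubini'[symmetric]) measurable
  also have "\<dots> = (\<integral>\<^sup>+z. (\<integral>\<^sup>+y. (if dist z y \<le> r then ball_weight M r z y else 0) \<partial>nu1) * h z \<partial>nu2)"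
    by (intro nn_integral_cong)
      (simp add: nn_integral_multc[symmetric] if_distrib[of "\<lambda>x. x * _"] dist_commute ball_weight_commute cong: if_cong)
  also have "\<dots> \<le> (\<integral>\<^sup>+z. ennreal (b1 * Cd\<^sup>2 * (2 * r) powr - \<theta>1) * h z \<partial>nu2)"
    using r by (intro nn_integral_mono mult_right_mono nu1.nn_integral_ball_weight_le) auto
  also have "\<dots> = ennreal (b1 * Cd\<^sup>2 * (2 * r) powr - \<theta>1) * (\<integral>\<^sup>+z. h z \<partial>nu2)"
    by (rule nn_integral_cmult) measurable
  finally show ?thesis .
qed

lemma epowr_ball_mean_diff_le_Av:
  assumes [measurable]: "f \<in> borel_measurable borel"
    and yz: "y \<in> S1" "z \<in> S2" and r: "0 < r" "r \<le> 1"
  defines "F \<equiv> \<lambda>x. ennreal (\<bar>f x\<bar> powr p)"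
  shows "epowr (ball_mean_diff nu1 nu2 r f y z) p
    \<le> ennreal (2 powr p) * Av nu1 (cball y r) F + ennreal (2 powr p) * Av nu2 (cball z r) F"
proof -
  let ?c = "ennreal (2 powr p)"
  have pos: "0 < emeasure nu1 (cball y r)" "0 < emeasure nu2 (cball z r)"
    using yz r nu1.emeasure_nu_cball_pos nu2.emeasure_nu_cball_pos by auto
  have fin: "emeasure nu1 (cball y r) < \<infinity>" "emeasure nu2 (cball z r) < \<infinity>"
    using yz r nu1.emeasure_nu_cball_finite nu2.emeasure_nu_cball_finite by auto
  have "ennreal (\<bar>f y' - f z'\<bar> powr p) \<le> ?c * F z' + ?c * F y'" for y' z'
    using abs_diff_powr_le[of p "f z'" "f y'"] p_gt_1 unfolding F_def
    by (simp add: abs_minus_commute ennreal_mult[symmetric] ennreal_plus[symmetric] ennreal_leI del: ennreal_plus)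
  then have "epowr (ball_mean_diff nu1 nu2 r f y z) p
      \<le> Av nu1 (cball y r) (\<lambda>y'. Av nu2 (cball z r) (\<lambda>z'. ?c * F z' + ?c * F y'))"
    using epowr_ball_mean_diff_le[OF _ yz r] by (meson Av_mono order_trans \<open>f \<in> borel_measurable borel\<close>)
  also have "\<dots> = Av nu1 (cball y r) (\<lambda>y'. ?c * F y' + ?c * Av nu2 (cball z r) F)"
  proof -
    have "Av nu2 (cball z r) (\<lambda>z'. ?c * F z' + ?c * F y') = ?c * F y' + ?c * Av nu2 (cball z r) F" for y'
      using Av_affine[of nu2 "cball z r" F ?c "?c * F y'"] pos fin
      by (simp add: add.commute F_def measurable_cong_sets[OF nu2.sets_nu refl])
    then show ?thesis by simp
  qed
  also have "\<dots> = ?c * Av nu1 (cball y r) F + ?c * Av nu2 (cball z r) F"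
    using pos fin by (intro Av_affine) (auto simp: F_def measurable_cong_sets[OF nu1.sets_nu refl])
  finally show ?thesis .
qed

lemma gluing_integral_mean_diff_le_Lp:
  assumes r: "0 < r" "r \<le> 1/2"
  shows "\<exists>C\<ge>0. \<forall>f\<in>borel_measurable borel.
    gluing_integral M nu1 nu2 r (\<lambda>y z. epowr (ball_mean_diff nu1 nu2 r f y z) p)
      \<le> ennreal C * ((\<integral>\<^sup>+y. ennreal (\<bar>f y\<bar> powr p) \<partial>nu1) + (\<integral>\<^sup>+z. ennreal (\<bar>f z\<bar> powr p) \<partial>nu2))"
proof (intro exI[of _ "2 powr p * (b2 * Cd\<^sup>2 * (2 * r) powr - \<theta>2 * nu1.ball_ratio
    + b1 * Cd\<^sup>2 * (2 * r) powr - \<theta>1 * nu2.ball_ratio)"] conjI ballI)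
  show "0 \<le> 2 powr p * (b2 * Cd\<^sup>2 * (2 * r) powr - \<theta>2 * nu1.ball_ratio + b1 * Cd\<^sup>2 * (2 * r) powr - \<theta>1 * nu2.ball_ratio)"
    using nu1.c2_pos nu2.c2_pos nu1.ball_ratio_pos nu2.ball_ratio_pos by simp
  fix f :: "'a \<Rightarrow> real" assume [measurable]: "f \<in> borel_measurable borel"
  define F where "F = (\<lambda>x. ennreal (\<bar>f x\<bar> powr p))"
  let ?c = "ennreal (2 powr p)"
  have "gluing_integral M nu1 nu2 r (\<lambda>y z. epowr (ball_mean_diff nu1 nu2 r f y z) p)
      \<le> gluing_integral M nu1 nu2 r (\<lambda>y z. ?c * Av nu1 (cball y r) F + ?c * Av nu2 (cball z r) F)"
    using r unfolding F_def by (intro gluing_integral_mono epowr_ball_mean_diff_le_Av) auto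
  also have "\<dots> = ?c * gluing_integral M nu1 nu2 r (\<lambda>y z. Av nu1 (cball y r) F)
      + ?c * gluing_integral M nu1 nu2 r (\<lambda>y z. Av nu2 (cball z r) F)"
    unfolding F_def by (simp add: gluing_integral_add gluing_integral_cmult)
  also have "\<dots> \<le> ?c * (ennreal (b2 * Cd\<^sup>2 * (2 * r) powr - \<theta>2) * (ennreal nu1.ball_ratio * (\<integral>\<^sup>+y. F y \<partial>nu1)))
      + ?c * (ennreal (b1 * Cd\<^sup>2 * (2 * r) powr - \<theta>1) * (ennreal nu2.ball_ratio * (\<integral>\<^sup>+z. F z \<partial>nu2)))"
    using r unfolding F_def
    by (intro add_mono mult_left_mono order_trans[OF gluing_integral_left_le] order_trans[OF gluing_integral_right_le]
        nu1.nn_integral_Av_cball_le nu2.nn_integral_Av_cball_le) auto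
  also have "\<dots> \<le> ennreal (2 powr p * (b2 * Cd\<^sup>2 * (2 * r) powr - \<theta>2 * nu1.ball_ratio + b1 * Cd\<^sup>2 * (2 * r) powr - \<theta>1 * nu2.ball_ratio))
      * ((\<integral>\<^sup>+y. F y \<partial>nu1) + (\<integral>\<^sup>+z. F z \<partial>nu2))"
    using nu1.c2_pos nu2.c2_pos nu1.ball_ratio_pos nu2.ball_ratio_pos
    by (simp add: ennreal_mult ennreal_plus distrib_left distrib_right mult_ac add_mono mult_right_mono)
  finally show "gluing_integral M nu1 nu2 r (\<lambda>y z. epowr (ball_mean_diff nu1 nu2 r f y z) p)
      \<le> ennreal (2 powr p * (b2 * Cd\<^sup>2 * (2 * r) powr - \<theta>2 * nu1.ball_ratio + b1 * Cd\<^sup>2 * (2 * r) powr - \<theta>1 * nu2.ball_ratio))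
      * ((\<integral>\<^sup>+y. ennreal (\<bar>f y\<bar> powr p) \<partial>nu1) + (\<integral>\<^sup>+z. ennreal (\<bar>f z\<bar> powr p) \<partial>nu2))"
    unfolding F_def .
qed

lemma gluing_series_mean_diff_le:
  "\<exists>C\<ge>0. \<forall>f\<in>borel_measurable borel.
    gluing_series p M \<theta>1 nu1 \<theta>2 nu2 (\<lambda>k y z. epowr (ball_mean_diff nu1 nu2 (2 powr - real k) f y z) p)
      \<le> ennreal C * (gluing_series p M \<theta>1 nu1 \<theta>2 nu2 (\<lambda>k y z. ennreal (\<bar>f y - f z\<bar> powr p))
          + ((\<integral>\<^sup>+y. ennreal (\<bar>f y\<bar> powr p) \<partial>nu1) + (\<integral>\<^sup>+z. ennreal (\<bar>f z\<bar> powr p) \<partial>nu2)))"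
proof -
  define e where "e k = 2 powr (real k * (p - \<theta>1 - \<theta>2))" for k :: nat
  define CL where "CL = Cd ^ 3 * nu1.ball_ratio * nu2.ball_ratio"
  let ?L = "\<lambda>f. (\<integral>\<^sup>+y. ennreal (\<bar>f y\<bar> powr p) \<partial>nu1) + (\<integral>\<^sup>+z. ennreal (\<bar>f z\<bar> powr p) \<partial>nu2)"
  let ?A = "\<lambda>f k. gluing_integral M nu1 nu2 (2 powr - real k) (\<lambda>y z. epowr (ball_mean_diff nu1 nu2 (2 powr - real k) f y z) p)"
  let ?B = "\<lambda>f k. gluing_integral M nu1 nu2 (2 powr - real k) (\<lambda>y z. ennreal (\<bar>f y - f z\<bar> powr p))"
  have e: "0 \<le> e k" "e (Suc (Suc k)) = e 2 * e k" for k
    unfolding e_def by (simp_all add: powr_add[symmetric] algebra_simps)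
  have CL: "0 \<le> CL" unfolding CL_def using nu1.Cd_ge_1 nu1.ball_ratio_pos nu2.ball_ratio_pos by simp
  have "0 < (2::real) powr - real (Suc 0)" "(2::real) powr - real (Suc 0) \<le> 1/2"
    using dyadic_le[of 1 "Suc 0"] by auto
  then obtain C1 where C1: "0 \<le> C1" "\<forall>f\<in>borel_measurable borel. ?A f (Suc 0) \<le> ennreal C1 * ?L f"
    by (blast dest: gluing_integral_mean_diff_le_Lp)
  have "0 < (2::real) powr - real (Suc (Suc 0))" "(2::real) powr - real (Suc (Suc 0)) \<le> 1/2"
    using dyadic_le[of 1 "Suc (Suc 0)"] by auto
  then obtain C2 where C2: "0 \<le> C2" "\<forall>f\<in>borel_measurable borel. ?A f (Suc (Suc 0)) \<le> ennreal C2 * ?L f"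
    by (blast dest: gluing_integral_mean_diff_le_Lp)
  have large: "?A f (Suc (Suc (Suc k))) \<le> ennreal CL * ?B f (Suc k)" if "f \<in> borel_measurable borel" for f k
  proof -
    have "0 < (2::real) powr - real (Suc (Suc (Suc k)))" "(2::real) powr - real (Suc (Suc (Suc k))) \<le> 1/4"
      using dyadic_le[of 2 "Suc (Suc (Suc k))"] by auto
    from gluing_integral_mean_diff_le_rescaled[OF that this] show ?thesis
      unfolding CL_def four_times_dyadic .
  qed
  define D where "D = e 2 * CL + (e (Suc 0) * C1 + e 2 * C2)"
  have "gluing_series p M \<theta>1 nu1 \<theta>2 nu2 (\<lambda>k y z. epowr (ball_mean_diff nu1 nu2 (2 powr - real k) f y z) p)
      \<le> ennreal D * (gluing_series p M \<theta>1 nu1 \<theta>2 nu2 (\<lambda>k y z. ennreal (\<bar>f y - f z\<bar> powr p)) + ?L f)"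
    if f: "f \<in> borel_measurable borel" for f
  proof -
    have "(\<Sum>k. ennreal (e (Suc k)) * ?A f (Suc k)) \<le> ennreal D * ((\<Sum>k. ennreal (e (Suc k)) * ?B f (Suc k)) + ?L f)"
      unfolding D_def using f
      by (intro geometric_series_shift_le[where a = "?A f" and b = "?B f", OF e large[OF f]] CL C1 C2 bspec[OF C1(2)]
          bspec[OF C2(2)])
    then show ?thesis unfolding gluing_series_def e_def .
  qed
  moreover have "0 \<le> D" unfolding D_def using e(1) CL C1(1) C2(1) by simp
  ultimately show ?thesis by blast
qed

end

section \<open>The gluing functionals\<close>

lemma sets_Hmeas: "sets (Hmeas M \<theta>) = sets borel"
  unfolding Hmeas_def by (simp add: sets_measure_of_conv sets.sigma_sets_eq[of borel, simplified])

lemma sets_Hrestr: "sets (Hrestr M \<theta> S) = sets borel"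
  unfolding Hrestr_def by (simp add: sets_Hmeas)

lemma emeasure_Hmeas:
  "E \<in> sets borel \<Longrightarrow> emeasure (Hmeas M \<theta>) E =
    (if measure_space UNIV (sets borel) (Hth M \<theta>) then Hth M \<theta> E else 0)"
  unfolding Hmeas_def by (simp add: emeasure_measure_of_conv sets.sigma_sets_eq[of borel, simplified])

lemma emeasure_Hrestr:
  assumes [measurable]: "E \<in> sets borel" "S \<in> sets borel"
  shows "emeasure (Hrestr M \<theta> S) E = emeasure (Hmeas M \<theta>) (E \<inter> S)"
proof -
  have [measurable_cong]: "sets (Hmeas M \<theta>) = sets borel" by (rule sets_Hmeas)
  have "emeasure (Hrestr M \<theta> S) E = (\<integral>\<^sup>+x. indicator S x * indicator E x \<partial>Hmeas M \<theta>)"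
    unfolding Hrestr_def by (subst emeasure_density) auto
  also have "\<dots> = (\<integral>\<^sup>+x. indicator (E \<inter> S) x \<partial>Hmeas M \<theta>)"
    by (intro nn_integral_cong) (simp split: split_indicator)
  finally show ?thesis by simp
qed

text \<open>\<open>Hmeas\<close> is built with \<open>measure_of\<close>, so it is the zero measure unless \<open>Hth M \<theta>\<close> is
  countably additive on the Borel sets; gluing terms involving such a piece vanish.\<close>

lemma nn_integral_Hrestr_null:
  assumes "\<not> measure_space UNIV (sets borel) (Hth M \<theta>)" "S \<in> sets borel"
  shows "(\<integral>\<^sup>+x. g x \<partial>Hrestr M \<theta> S) = 0"
proof -
  have "emeasure (Hrestr M \<theta> S) UNIV = 0"
    using assms by (simp add: emeasure_Hrestr emeasure_Hmeas)
  then have "AE x in Hrestr M \<theta> S. g x = 0"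
    by (intro AE_I[of _ _ UNIV]) (auto simp: sets_Hrestr)
  then show ?thesis by (simp add: nn_integral_cong_AE)
qed

lemma Av_Hrestr:
  assumes [measurable]: "B \<in> sets borel" "S \<in> sets borel" "g \<in> borel_measurable borel"
  shows "Av (Hmeas M \<theta>) (B \<inter> S) g = Av (Hrestr M \<theta> S) B g"
proof -
  have [measurable_cong]: "sets (Hmeas M \<theta>) = sets borel" by (rule sets_Hmeas)
  have "(\<integral>\<^sup>+x\<in>B \<inter> S. g x \<partial>Hmeas M \<theta>) = (\<integral>\<^sup>+x\<in>B. g x \<partial>Hrestr M \<theta> S)"
    unfolding Hrestr_def by (subst nn_integral_density) (auto intro!: nn_integral_cong split: split_indicator)
  then show ?thesis by (simp add: Av_def emeasure_Hrestr)
qed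

lemma ADR_measure_Hrestr:
  assumes dbl: "doubling_mms M Cd" and adr: "ADR M \<theta> S"
    and ms: "measure_space UNIV (sets borel) (Hth M \<theta>)"
  shows "\<exists>c1 c2. ADR_measure M Cd \<theta> S (Hrestr M \<theta> S) c1 c2"
proof -
  interpret doubling_mms M Cd by (rule dbl)
  obtain k1 k2 where S: "closed S" and k: "0 < k1" "0 < k2"
    and bounds: "\<And>x r. x \<in> S \<Longrightarrow> 0 < r \<Longrightarrow> r \<le> 1 \<Longrightarrow>
      ennreal k1 * emeasure M (cball x r) * ennreal (r powr - \<theta>) \<le> Hth M \<theta> (cball x r \<inter> S) \<and>
      Hth M \<theta> (cball x r \<inter> S) \<le> ennreal k2 * emeasure M (cball x r) * ennreal (r powr - \<theta>)"
    using adr unfolding ADR_def by blast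
  have [simp]: "emeasure (Hrestr M \<theta> S) (cball x r) = Hth M \<theta> (cball x r \<inter> S)" for x r
    using S ms by (simp add: emeasure_Hrestr emeasure_Hmeas borel_closed)
  have [simp]: "ennreal (c * ball_measure x r * r powr - \<theta>) = ennreal c * emeasure M (cball x r) * ennreal (r powr - \<theta>)"
    if "0 \<le> c" for c x r
    using that by (simp add: emeasure_cball_eq ennreal_mult)
  have "ADR_measure M Cd \<theta> S (Hrestr M \<theta> S) k1 k2"
    by unfold_locales (use S k bounds in \<open>auto simp: sets_Hrestr emeasure_Hrestr borel_closed less_imp_le\<close>)
  then show ?thesis by blast
qed

lemma gluing_integral_Hrestr_null:
  assumes "\<not> measure_space UNIV (sets borel) (Hth M \<theta>1) \<or> \<not> measure_space UNIV (sets borel) (Hth M \<theta>2)"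
    and "S1 \<in> sets borel" "S2 \<in> sets borel"
  shows "gluing_integral M (Hrestr M \<theta>1 S1) (Hrestr M \<theta>2 S2) r g = 0"
  using assms unfolding gluing_integral_def by (auto simp: nn_integral_Hrestr_null)

lemma gluing_series_Hrestr_le:
  assumes dbl: "doubling_mms M Cd" and adr: "ADR M \<theta>1 S1" "ADR M \<theta>2 S2" and p: "1 < p"
  shows "\<exists>C\<ge>0. \<forall>f\<in>borel_measurable borel.
    gluing_series p M \<theta>1 (Hrestr M \<theta>1 S1) \<theta>2 (Hrestr M \<theta>2 S2)
      (\<lambda>k y z. epowr (Av (Hmeas M \<theta>1) (cball y (2 powr - real k) \<inter> S1)
         (\<lambda>y'. Av (Hmeas M \<theta>2) (cball z (2 powr - real k) \<inter> S2) (\<lambda>z'. ennreal \<bar>f y' - f z'\<bar>))) p)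
    \<le> ennreal C * (gluing_series p M \<theta>1 (Hrestr M \<theta>1 S1) \<theta>2 (Hrestr M \<theta>2 S2) (\<lambda>k y z. ennreal (\<bar>f y - f z\<bar> powr p))
        + ((\<integral>\<^sup>+y. ennreal (\<bar>f y\<bar> powr p) \<partial>Hrestr M \<theta>1 S1) + (\<integral>\<^sup>+z. ennreal (\<bar>f z\<bar> powr p) \<partial>Hrestr M \<theta>2 S2)))"
proof (cases "measure_space UNIV (sets borel) (Hth M \<theta>1) \<and> measure_space UNIV (sets borel) (Hth M \<theta>2)")
  case True
  then obtain a1 b1 a2 b2 where "ADR_measure M Cd \<theta>1 S1 (Hrestr M \<theta>1 S1) a1 b1"
    "ADR_measure M Cd \<theta>2 S2 (Hrestr M \<theta>2 S2) a2 b2"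
    using ADR_measure_Hrestr[OF dbl] adr by blast
  then interpret ADR_pair M Cd \<theta>1 S1 "Hrestr M \<theta>1 S1" a1 b1 \<theta>2 S2 "Hrestr M \<theta>2 S2" a2 b2 p
    using p by (simp add: ADR_pair_def ADR_pair_axioms_def)
  have S: "S1 \<in> sets borel" "S2 \<in> sets borel"
    using nu1.closed_S nu2.closed_S by (auto simp: borel_closed)
  have "Av (Hmeas M \<theta>1) (cball y r \<inter> S1) (\<lambda>y'. Av (Hmeas M \<theta>2) (cball z r \<inter> S2) (\<lambda>z'. ennreal \<bar>f y' - f z'\<bar>))
      = ball_mean_diff (Hrestr M \<theta>1 S1) (Hrestr M \<theta>2 S2) r f y z"
    if [measurable]: "f \<in> borel_measurable borel" for f y z r
    using S unfolding ball_mean_diff_def by (simp add: Av_Hrestr)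
  then show ?thesis using gluing_series_mean_diff_le by simp
next
  case False
  then show ?thesis
    using adr by (intro exI[of _ 0]) (simp add: gluing_series_def gluing_integral_Hrestr_null ADR_def borel_closed)
qed

lemma GLsum_eq_gluing_series:
  "GLsum p M N \<theta> S g = epowr (\<Sum>i\<in>{1..N}. \<Sum>j\<in>{1..N}. if i = j then 0 else
     gluing_series p M (\<theta> i) (Hrestr M (\<theta> i) (S i)) (\<theta> j) (Hrestr M (\<theta> j) (S j)) (g i j)) (1 / p)"
  unfolding GLsum_def gluing_series_def gluing_integral_def ball_weight_def wk_def Let_def ..

lemma gluing_series_uniform_bound:
  assumes dbl: "doubling_mms M Cd" and adr: "\<forall>i\<in>I. ADR M (\<theta> i) (S i)" and I: "finite I" and p: "1 < p"
  shows "\<exists>C>0. \<forall>f\<in>borel_measurable borel. \<forall>i\<in>I. \<forall>j\<in>I.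
    gluing_series p M (\<theta> i) (Hrestr M (\<theta> i) (S i)) (\<theta> j) (Hrestr M (\<theta> j) (S j))
      (\<lambda>k y z. epowr (Aijk M \<theta> S i j k f y z) p)
    \<le> ennreal C * (gluing_series p M (\<theta> i) (Hrestr M (\<theta> i) (S i)) (\<theta> j) (Hrestr M (\<theta> j) (S j))
        (\<lambda>k y z. ennreal (\<bar>f y - f z\<bar> powr p)) +
      ((\<integral>\<^sup>+x. ennreal (\<bar>f x\<bar> powr p) \<partial>Hrestr M (\<theta> i) (S i)) +
       (\<integral>\<^sup>+x. ennreal (\<bar>f x\<bar> powr p) \<partial>Hrestr M (\<theta> j) (S j))))"
  unfolding Aijk_def using adr
  by (intro uniform_bound_on_pairs[OF I] ballI gluing_series_Hrestr_le[OF dbl _ _ p]) auto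

lemma GL3_le_GL1_Lpnorm:
  assumes p: "1 < p" and C: "0 \<le> C"
    and pairs: "\<forall>i\<in>{1..N}. \<forall>j\<in>{1..N}.
      gluing_series p M (\<theta> i) (Hrestr M (\<theta> i) (S i)) (\<theta> j) (Hrestr M (\<theta> j) (S j))
        (\<lambda>k y z. epowr (Aijk M \<theta> S i j k f y z) p)
      \<le> ennreal C * (gluing_series p M (\<theta> i) (Hrestr M (\<theta> i) (S i)) (\<theta> j) (Hrestr M (\<theta> j) (S j))
          (\<lambda>k y z. ennreal (\<bar>f y - f z\<bar> powr p)) +
        ((\<integral>\<^sup>+x. ennreal (\<bar>f x\<bar> powr p) \<partial>Hrestr M (\<theta> i) (S i)) +
         (\<integral>\<^sup>+x. ennreal (\<bar>f x\<bar> powr p) \<partial>Hrestr M (\<theta> j) (S j))))"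
  shows "GL3 p M N \<theta> S f \<le> ennreal ((C * (2 * real N + 1)) powr (1 / p)) *
    (GL1 p M N \<theta> S f + (\<Sum>i\<in>{1..N}. Lpnorm p (Hrestr M (\<theta> i) (S i)) f))"
proof -
  have "epowr (\<Sum>i\<in>{1..N}. \<Sum>j\<in>{1..N}. if i = j then 0 else
      gluing_series p M (\<theta> i) (Hrestr M (\<theta> i) (S i)) (\<theta> j) (Hrestr M (\<theta> j) (S j))
        (\<lambda>k y z. epowr (Aijk M \<theta> S i j k f y z) p)) (1 / p)
    \<le> ennreal ((C * (2 * real (card {1..N}) + 1)) powr (1 / p)) *
      (epowr (\<Sum>i\<in>{1..N}. \<Sum>j\<in>{1..N}. if i = j then 0 else
        gluing_series p M (\<theta> i) (Hrestr M (\<theta> i) (S i)) (\<theta> j) (Hrestr M (\<theta> j) (S j))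
          (\<lambda>k y z. ennreal (\<bar>f y - f z\<bar> powr p))) (1 / p) +
       (\<Sum>i\<in>{1..N}. epowr (\<integral>\<^sup>+x. ennreal (\<bar>f x\<bar> powr p) \<partial>Hrestr M (\<theta> i) (S i)) (1 / p)))"
    by (rule epowr_offdiag_sum_le) (use pairs p C in auto)
  then show ?thesis
    unfolding GL3_def GL1_def GLsum_eq_gluing_series Lpnorm_def by simp
qed

theorem lemma3p10:
  fixes M :: "'a::polish_space measure"
    and p :: real and N :: nat and \<theta> :: "nat \<Rightarrow> real" and \<theta>bar :: real
    and S :: "nat \<Rightarrow> 'a set"
  assumes borel: "sets M = sets borel"
    and locfin: "locally_finite_msr M"
    and supp: "full_support M"
    and doubling: "unif_loc_doubling M"
    and p: "1 < p"
    and poincare: "weak_local_poincare p M"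
    and thetabar: "0 \<le> \<theta>bar" "\<theta>bar < min p (Qlow M)"
    and N: "N \<ge> 2"
    and theta_pos: "0 < \<theta> 1"
    and theta_mono: "\<forall>i j. 1 \<le> i \<and> i < j \<and> j \<le> N \<longrightarrow> \<theta> i < \<theta> j"
    and theta_N: "\<theta> N = \<theta>bar"
    and S_ADR: "\<forall>i\<in>{1..N}. closed (S i) \<and> ADR M (\<theta> i) (S i)"
  shows "\<exists>C::real. C > 0 \<and>
           (\<forall>f::'a \<Rightarrow> real. (\<forall>i\<in>{1..N}. inLp p (Hrestr M (\<theta> i) (S i)) f) \<longrightarrow>
              GL3 p M N \<theta> S f
                \<le> ennreal C * (GL1 p M N \<theta> S f + (\<Sum>i\<in>{1..N}. Lpnorm p (Hrestr M (\<theta> i) (S i)) f)))"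
proof -
  obtain Cd where dbl: "doubling_mms M Cd"
    using doubling_mms_exists[OF borel locfin supp doubling] by blast
  have "\<forall>i\<in>{1..N}. ADR M (\<theta> i) (S i)" using S_ADR by blast
  from gluing_series_uniform_bound[OF dbl this finite_atLeastAtMost p]
  obtain C where C: "0 < C" and pairs: "\<forall>f\<in>borel_measurable borel. \<forall>i\<in>{1..N}. \<forall>j\<in>{1..N}.
    gluing_series p M (\<theta> i) (Hrestr M (\<theta> i) (S i)) (\<theta> j) (Hrestr M (\<theta> j) (S j))
      (\<lambda>k y z. epowr (Aijk M \<theta> S i j k f y z) p)
    \<le> ennreal C * (gluing_series p M (\<theta> i) (Hrestr M (\<theta> i) (S i)) (\<theta> j) (Hrestr M (\<theta> j) (S j))
        (\<lambda>k y z. ennreal (\<bar>f y - f z\<bar> powr p)) +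
      ((\<integral>\<^sup>+x. ennreal (\<bar>f x\<bar> powr p) \<partial>Hrestr M (\<theta> i) (S i)) +
       (\<integral>\<^sup>+x. ennreal (\<bar>f x\<bar> powr p) \<partial>Hrestr M (\<theta> j) (S j))))"
    by blast
  show ?thesis
  proof (intro exI[of _ "(C * (2 * real N + 1)) powr (1 / p)"] conjI allI impI)
    show "0 < (C * (2 * real N + 1)) powr (1 / p)" using C by simp
    fix f :: "'a \<Rightarrow> real"
    assume "\<forall>i\<in>{1..N}. inLp p (Hrestr M (\<theta> i) (S i)) f"
    then have "inLp p (Hrestr M (\<theta> 1) (S 1)) f" using N by simp
    then have "f \<in> borel_measurable borel"
      unfolding inLp_def by (simp add: measurable_cong_sets[OF sets_Hrestr refl])
    with pairs p C show "GL3 p M N \<theta> S f \<le> ennreal ((C * (2 * real N + 1)) powr (1 / p)) *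
        (GL1 p M N \<theta> S f + (\<Sum>i\<in>{1..N}. Lpnorm p (Hrestr M (\<theta> i) (S i)) f))"
      by (intro GL3_le_GL1_Lpnorm) auto
  qed
qed

end
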